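(* Let $\mathfrak{g}=\mathfrak{so}_{2r+1}$, $r\geqslant 3$, with Cartan subalgebra $\mathfrak{h}$, roots $\{\pm\varepsilon_i\pm\varepsilon_j,\pm\varepsilon_i\}$, simple roots $\alpha_1,\dots,\alpha_r$ (Bourbaki numbering), fundamental weights $\varpi_1,\dots,\varpi_r$, and adjoint group $G$; identify $\mathfrak{g}^*\cong\mathfrak{g}$ and $\mathfrak{h}^*\cong\mathfrak{h}$ via the normalized invariant form. Let $W_2\subset S^2(\mathfrak{g})$ be the $\mathfrak{g}$-submodule generated by $w_2=e_\theta e_{\theta_2}-e_{\alpha_2+\theta_2}e_{\alpha_1+\alpha_2+\alpha_3+\theta_2}-e_{\alpha_2+\alpha_3+\theta_2}e_{\alpha_1+\alpha_2+\theta_2}$ (with $\theta$ the highest root and $\theta_2$ the highest root of the subsystem generated by $\alpha_3,\dots,\alpha_r$, and $e_\alpha$ Chevalley root vectors), and let $V(W_2)$ be the zero locus in $\mathfrak{g}^*$ of the ideal generated by $W_2$. Let $\lambda$ be a nonzero semisimple element of $\mathfrak{g}^*\cong\mathfrak{g}$ lying in $V(W_2)$. Then either $\lambda\in G.\mathbb{C}\varpi_1$, or $\lambda\in G.\mathbb{C}(-\varpi_{i-1}+\varpi_i)$ for some $i\in\{2,\dots,r-1\}$, or $\lambda\in G.\mathbb{C}(-\varpi_{r-1}+2\varpi_r)$. Moreover, for $\lambda\in\mathfrak{h}^*$, $\lambda\in V(W_2)$ if and only if $\lambda\in\bigcup_{i=1}^r\mathbb{C}\varepsilon_i=G.\mathbb{C}\varepsilon_1$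 (intersected with $\mathfrak{h}^*$). *)

theory Defs
  imports "Jordan_Normal_Form.Determinant"
begin

text \<open>V = C^(2r+1) with basis v_1..v_r, v_0, v_(-r)..v_(-1); the vector v_i (i>0) has
  index i-1, v_0 has index r, v_(-i) has index 2r+1-i.  The invariant symmetric
  bilinear form is the anti-diagonal matrix J, so B(v_i, v_(-i)) = 1 = B(v_0,v_0).\<close>

definition dimV :: "nat \<Rightarrow> nat" where
  "dimV r = 2 * r + 1"

definition idx :: "nat \<Rightarrow> int \<Rightarrow> nat" where
  "idx r i = (if i > 0 then nat i - 1 else if i = 0 then r else nat (int (2 * r + 1) + i))"

definition Emat :: "nat \<Rightarrow> int \<Rightarrow> int \<Rightarrow> complex mat" where
  "Emat r a b = mat (dimV r) (dimV r) (\<lambda>(p, q). if p = idx r a \<and> q = idx r b then 1 else 0)"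

definition Jform :: "nat \<Rightarrow> complex mat" where
  "Jform r = mat (dimV r) (dimV r) (\<lambda>(p, q). if p + q = 2 * r then 1 else 0)"

definition so :: "nat \<Rightarrow> complex mat set" where
  "so r = {X \<in> carrier_mat (dimV r) (dimV r).
            transpose_mat X * Jform r + Jform r * X = 0\<^sub>m (dimV r) (dimV r)}"

text \<open>The adjoint group of so_(2r+1) is SO_(2r+1) acting by conjugation.\<close>
definition SOgrp :: "nat \<Rightarrow> complex mat set" where
  "SOgrp r = {g \<in> carrier_mat (dimV r) (dimV r).
               transpose_mat g * Jform r * g = Jform r \<and> det g = 1}"

text \<open>G.S : the union of the adjoint orbits of elements of S (g x g^-1 = mu iff g x = mu g).\<close>
definition orbit :: "nat \<Rightarrow> complex mat set \<Rightarrow> complex mat set" where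
  "orbit r S = {\<mu> \<in> carrier_mat (dimV r) (dimV r). \<exists>g \<in> SOgrp r. \<exists>x \<in> S. g * x = \<mu> * g}"

definition cline :: "complex mat \<Rightarrow> complex mat set" where
  "cline A = {c \<cdot>\<^sub>m A | c. True}"

definition mtrace :: "complex mat \<Rightarrow> complex" where
  "mtrace A = (\<Sum>i<dim_row A. A $$ (i, i))"

text \<open>Linear form on g* = g attached to a \<in> g (invariant form, up to a nonzero scalar).\<close>
definition ell :: "complex mat \<Rightarrow> complex mat \<Rightarrow> complex" where
  "ell a l = mtrace (a * l)"

text \<open>Chevalley root vectors (needed ones).  e_(eps_i + eps_j) = E_(i,-j) - E_(j,-i), except
  that the sign of e_(eps_2+eps_3) is reversed (sign convention);
  e_(eps_i) = E_(i,0) - E_(0,-i); e_(eps_i - eps_j) = E_(i,j) - E_(-j,-i).\<close>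
definition epp :: "nat \<Rightarrow> int \<Rightarrow> int \<Rightarrow> complex mat" where
  "epp r i j = (if (i, j) = (2, 3) then -1 else 1) \<cdot>\<^sub>m (Emat r i (-j) - Emat r j (-i))"

definition esh :: "nat \<Rightarrow> int \<Rightarrow> complex mat" where
  "esh r i = Emat r i 0 - Emat r 0 (-i)"

text \<open>Elements of S^2(g) as formal sums  sum c * a * b  (a, b \<in> g), viewed as quadratic
  functions on g* = g.\<close>
type_synonym sym2 = "(complex \<times> complex mat \<times> complex mat) list"

definition eval2 :: "sym2 \<Rightarrow> complex mat \<Rightarrow> complex" where
  "eval2 s l = (\<Sum>(c, a, b) \<leftarrow> s. c * ell a l * ell b l)"

definition act :: "complex mat \<Rightarrow> sym2 \<Rightarrow> sym2" where
  "act y s = concat (map (\<lambda>(c, a, b). [(c, y * a - a * y, b), (c, a, y * b - b * y)]) s)"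

text \<open>w_2 = e_theta e_theta2 - e_(alpha2+theta2) e_(alpha1+alpha2+alpha3+theta2)
            - e_(alpha2+alpha3+theta2) e_(alpha1+alpha2+theta2), written in eps-coordinates:
  for r \<ge> 4: theta = eps1+eps2, theta2 = eps3+eps4, and the roots are
     eps2+eps4, eps1+eps3, eps2+eps3, eps1+eps4;
  for r = 3: theta2 = alpha3 = eps3, and the roots are eps2, eps1+eps3, eps2+eps3, eps1.\<close>
definition w2 :: "nat \<Rightarrow> sym2" where
  "w2 r = (if r \<ge> 4 then
      [(1, epp r 1 2, epp r 3 4), (-1, epp r 2 4, epp r 1 3), (-1, epp r 2 3, epp r 1 4)]
    else
      [(1, epp r 1 2, esh r 3), (-1, esh r 2, epp r 1 3), (-1, epp r 2 3, esh r 1)])"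

inductive_set W2mod :: "nat \<Rightarrow> sym2 set" for r :: nat where
  gen: "w2 r \<in> W2mod r"
| zero: "[] \<in> W2mod r"
| add: "s \<in> W2mod r \<Longrightarrow> t \<in> W2mod r \<Longrightarrow> s @ t \<in> W2mod r"
| smult: "s \<in> W2mod r \<Longrightarrow> map (\<lambda>(c, a, b). (k * c, a, b)) s \<in> W2mod r"
| act: "y \<in> so r \<Longrightarrow> s \<in> W2mod r \<Longrightarrow> act y s \<in> W2mod r"

definition VW2 :: "nat \<Rightarrow> complex mat set" where
  "VW2 r = {l \<in> so r. \<forall>s \<in> W2mod r. eval2 s l = 0}"

text \<open>Cartan subalgebra h (diagonal matrices in so); hvec r c is the element of h = h*
  corresponding to the weight  sum_i c_i eps_i  (identification by the normalized form).\<close>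
definition hvec :: "nat \<Rightarrow> (nat \<Rightarrow> complex) \<Rightarrow> complex mat" where
  "hvec r c = mat (dimV r) (dimV r) (\<lambda>(p, q). if p = q then
      (if p < r then c (p + 1) else if p = r then 0 else - c (2 * r + 1 - p)) else 0)"

definition hcart :: "nat \<Rightarrow> complex mat set" where
  "hcart r = range (hvec r)"

definition eps :: "nat \<Rightarrow> nat \<Rightarrow> complex" where
  "eps i = (\<lambda>j. if j = i then 1 else 0)"

definition fw :: "nat \<Rightarrow> nat \<Rightarrow> nat \<Rightarrow> complex" where
  "fw r i = (\<lambda>j. if i < r then (if j \<le> i then 1 else 0) else 1 / 2)"

definition semisimple :: "complex mat \<Rightarrow> bool" where
  "semisimple A \<longleftrightarrow> (\<exists>D. diagonal_mat D \<and> similar_mat A D)"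

end

theory Submission
  imports Defs
begin

text \<open>
  Via the invariant form, \<open>so\<^sub>2\<^sub>r\<^sub>+\<^sub>1\<close> is \<open>\<Lambda>\<^sup>2 V\<close>, and \<open>l \<mapsto> J l\<close> turns its elements into
  skew-symmetric matrices. The generator \<open>w\<^sub>2\<close> is four times the Pfaffian of one principal
  \<open>4 \<times> 4\<close> submatrix; applying root vectors moves the indices of such a Pfaffian, so \<open>W\<^sub>2\<close>
  contains all of them, i.e. all Pluecker relations. Hence \<open>V(W\<^sub>2)\<close> consists exactly of the
  decomposable elements \<open>u \<and> w\<close> (conversely \<open>W\<^sub>2\<close> vanishes there, since \<open>w\<^sub>2\<close> does and the
  cone of decomposable elements is stable under the action).

  Since \<open>(u \<and> w)\<^sup>3 = (B(u,w)\<^sup>2 - B(u,u) B(w,w)) (u \<and> w)\<close>, a nonzero semisimple \<open>u \<and> w\<close> spans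
  a nondegenerate plane. That plane contains a hyperbolic pair, which Witt's theorem (realised by
  reflections, and multiplied by \<open>-1\<close> if necessary to land in \<open>SO\<close>) moves to \<open>v\<^sub>1, v\<^sub>-\<^sub>1\<close>;
  so \<open>u \<and> w\<close> is conjugate to a multiple of \<open>\<epsilon>\<^sub>1 = \<varpi>\<^sub>1\<close>, and only the first alternative of the
  theorem occurs. A diagonal element of \<open>V(W\<^sub>2)\<close> has \<open>c\<^sub>i c\<^sub>j = 0\<close> for \<open>i \<noteq> j\<close>, so it lies on
  one of the lines \<open>\<complex> \<epsilon>\<^sub>i\<close>.
\<close>

declare minus_carrier_mat[simp]

lemma index_mult_sum:
  assumes "A \<in> carrier_mat n m" "B \<in> carrier_mat m k" "i < n" "j < k"
  shows "(A * B) $$ (i, j) = (\<Sum>l<m. A $$ (i, l) * B $$ (l, j))"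
  using assms by (auto simp: scalar_prod_def lessThan_atLeast0 intro!: sum.cong)

lemma Jform_carrier[simp]: "Jform r \<in> carrier_mat (dimV r) (dimV r)"
  by (simp add: Jform_def)

lemma Jform_dim[simp]: "dim_row (Jform r) = dimV r" "dim_col (Jform r) = dimV r"
  by (simp_all add: Jform_def)

lemma Jform_index: "i < dimV r \<Longrightarrow> j < dimV r \<Longrightarrow> Jform r $$ (i,j) = (if i + j = 2*r then 1 else 0)"
  by (simp add: Jform_def)

lemma sum_Jform_right:
  assumes "j < dimV r"
  shows "(\<Sum>k<dimV r. f k * (if k + j = 2*r then 1 else 0)) = (f (2*r - j) :: complex)"
proof -
  have "(\<Sum>k<dimV r. f k * (if k + j = 2*r then 1 else 0)) = (\<Sum>k<dimV r. if k = 2*r - j then f k else 0)"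
    using assms by (intro sum.cong) (auto simp: dimV_def)
  also have "\<dots> = f (2*r - j)" using assms by (simp add: dimV_def)
  finally show ?thesis .
qed

lemma sum_Jform_left:
  assumes "j < dimV r"
  shows "(\<Sum>k<dimV r. (if j + k = 2*r then 1 else 0) * f k) = (f (2*r - j) :: complex)"
proof -
  have "(\<Sum>k<dimV r. (if j + k = 2*r then 1 else 0) * f k) = (\<Sum>k<dimV r. if k = 2*r - j then f k else 0)"
    using assms by (intro sum.cong) (auto simp: dimV_def)
  also have "\<dots> = f (2*r - j)" using assms by (simp add: dimV_def)
  finally show ?thesis .
qed

lemma Jform_square: "Jform r * Jform r = 1\<^sub>m (dimV r)"
proof (rule eq_matI)
  fix i j assume "i < dim_row (1\<^sub>m (dimV r))" "j < dim_col (1\<^sub>m (dimV r))"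
  hence ij: "i < dimV r" "j < dimV r" by auto
  have "(Jform r * Jform r) $$ (i,j) = (\<Sum>k<dimV r. (if i + k = 2*r then 1 else 0) * Jform r $$ (k,j))"
    using ij by (subst index_mult_sum[of _ "dimV r" "dimV r" _ "dimV r"]) (auto simp: Jform_index)
  also have "\<dots> = Jform r $$ (2*r - i, j)" by (rule sum_Jform_left[OF ij(1)])
  also have "\<dots> = 1\<^sub>m (dimV r) $$ (i,j)" using ij by (auto simp: Jform_index dimV_def)
  finally show "(Jform r * Jform r) $$ (i,j) = 1\<^sub>m (dimV r) $$ (i,j)" .
qed auto

lemma sum_reflect_index: "(\<Sum>k<dimV r. f (2*r - k)) = (\<Sum>k<dimV r. f k)"
  by (rule sum.reindex_bij_witness[where i="\<lambda>k. 2*r-k" and j="\<lambda>k. 2*r-k"]) (auto simp: dimV_def)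

lemma so_iff:
  "X \<in> so r \<longleftrightarrow> X \<in> carrier_mat (dimV r) (dimV r) \<and>
     (\<forall>i<dimV r. \<forall>j<dimV r. X $$ (2*r-i, j) + X $$ (2*r-j, i) = 0)"
proof (cases "X \<in> carrier_mat (dimV r) (dimV r)")
  case True
  have dX[simp]: "dim_row X = dimV r" "dim_col X = dimV r" using True by auto
  have e: "(transpose_mat X * Jform r + Jform r * X) $$ (i,j) = X $$ (2*r-j, i) + X $$ (2*r-i, j)"
    if "i < dimV r" "j < dimV r" for i j
  proof -
    have "(transpose_mat X * Jform r) $$ (i,j) = (\<Sum>k<dimV r. X $$ (k,i) * (if k + j = 2*r then 1 else 0))"
      using True that by (subst index_mult_sum[of _ "dimV r" "dimV r" _ "dimV r"]) (auto simp: Jform_index)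
    also have "\<dots> = X $$ (2*r-j, i)" by (rule sum_Jform_right[OF that(2)])
    finally have 1: "(transpose_mat X * Jform r) $$ (i,j) = X $$ (2*r-j, i)" .
    have "(Jform r * X) $$ (i,j) = (\<Sum>k<dimV r. (if i + k = 2*r then 1 else 0) * X $$ (k,j))"
      using True that by (subst index_mult_sum[of _ "dimV r" "dimV r" _ "dimV r"]) (auto simp: Jform_index)
    also have "\<dots> = X $$ (2*r-i, j)" by (rule sum_Jform_left[OF that(1)])
    finally have 2: "(Jform r * X) $$ (i,j) = X $$ (2*r-i, j)" .
    show ?thesis using True that 1 2 by (subst index_add_mat) auto
  qed
  show ?thesis
  proof
    assume "X \<in> so r"
    hence z: "transpose_mat X * Jform r + Jform r * X = 0\<^sub>m (dimV r) (dimV r)" by (simp add: so_def)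
    show "X \<in> carrier_mat (dimV r) (dimV r) \<and> (\<forall>i<dimV r. \<forall>j<dimV r. X $$ (2*r-i, j) + X $$ (2*r-j, i) = 0)"
      using True e[symmetric] arg_cong[OF z, of "\<lambda>M. M $$ (_,_)"] by (auto simp: add.commute)
  next
    assume h: "X \<in> carrier_mat (dimV r) (dimV r) \<and> (\<forall>i<dimV r. \<forall>j<dimV r. X $$ (2*r-i, j) + X $$ (2*r-j, i) = 0)"
    have "transpose_mat X * Jform r + Jform r * X = 0\<^sub>m (dimV r) (dimV r)"
      using True e h by (intro eq_matI) (auto simp: add.commute)
    thus "X \<in> so r" using True by (simp add: so_def)
  qed
qed (auto simp: so_def)

lemma so_carrier: "y \<in> so r \<Longrightarrow> y \<in> carrier_mat (dimV r) (dimV r)"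
  by (simp add: so_def)

lemma so_index_reflect:
  assumes "y \<in> so r" "k < dimV r" "j < dimV r"
  shows "y $$ (k, j) = - y $$ (2*r - j, 2*r - k)"
proof -
  have "2*r - k < dimV r" using assms by (auto simp: dimV_def)
  from assms(1)[unfolded so_iff] this assms(3)
  have "y $$ (2*r - (2*r-k), j) + y $$ (2*r - j, 2*r - k) = 0" by blast
  moreover have "2*r - (2*r-k) = k" using assms by (auto simp: dimV_def)
  ultimately show ?thesis by (simp add: eq_neg_iff_add_eq_0)
qed

lemma so_skew:
  assumes "l \<in> so r" "i < dimV r" "j < dimV r"
  shows "l $$ (2*r - i, j) = - l $$ (2*r - j, i)"
  using assms unfolding so_iff by (simp add: eq_neg_iff_add_eq_0)

lemma so_add: "X \<in> so r \<Longrightarrow> Y \<in> so r \<Longrightarrow> X + Y \<in> so r"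
  unfolding so_iff by (auto simp: algebra_simps dimV_def)

text \<open>For \<open>a, b \<in> so r\<close> the product \<open>J a b\<close> is the transpose of \<open>J b a\<close>.\<close>

lemma so_mult_sum_reflect:
  assumes a: "a \<in> so r" and b: "b \<in> so r" and ij: "i < dimV r" "j < dimV r"
  shows "(\<Sum>k<dimV r. a $$ (2*r-i,k) * b $$ (k,j)) = (\<Sum>k<dimV r. b $$ (2*r-j,k) * a $$ (k,i))"
proof -
  have "(\<Sum>k<dimV r. a $$ (2*r-i,k) * b $$ (k,j)) = (\<Sum>k<dimV r. a $$ (2*r-k, i) * b $$ (2*r-j, 2*r-k))"
  proof (intro sum.cong refl)
    fix k assume k: "k \<in> {..<dimV r}"
    have "a $$ (2*r-i,k) = - a $$ (2*r-k, i)" using so_skew[OF a ij(1)] k by auto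
    moreover have "b $$ (k,j) = - b $$ (2*r-j, 2*r-k)" using so_index_reflect[OF b _ ij(2)] k by auto
    ultimately show "a $$ (2*r-i,k) * b $$ (k,j) = a $$ (2*r-k, i) * b $$ (2*r-j, 2*r-k)" by simp
  qed
  also have "\<dots> = (\<Sum>k<dimV r. a $$ (k, i) * b $$ (2*r-j, k))"
    by (rule sum_reflect_index[where f="\<lambda>k. a $$ (k, i) * b $$ (2*r-j, k)"])
  finally show ?thesis by (simp add: mult.commute)
qed

lemma so_commutator:
  assumes l: "l \<in> so r" and y: "y \<in> so r"
  shows "l * y - y * l \<in> so r"
proof -
  have lc: "l \<in> carrier_mat (dimV r) (dimV r)" and yc: "y \<in> carrier_mat (dimV r) (dimV r)"
    using l y by (auto simp: so_def)
  have me: "(l * y - y * l) $$ (i,j) = (\<Sum>k<dimV r. l $$ (i,k) * y $$ (k,j)) - (\<Sum>k<dimV r. y $$ (i,k) * l $$ (k,j))"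
    if "i < dimV r" "j < dimV r" for i j
  proof -
    have "(l * y - y * l) $$ (i,j) = (l * y) $$ (i,j) - (y * l) $$ (i,j)"
      using that lc yc by (intro index_minus_mat(1)) auto
    thus ?thesis using index_mult_sum[OF lc yc that] index_mult_sum[OF yc lc that] by simp
  qed
  show ?thesis unfolding so_iff
  proof (intro conjI allI impI)
    show "l * y - y * l \<in> carrier_mat (dimV r) (dimV r)" using lc yc by auto
    fix i j assume ij: "i < dimV r" "j < dimV r"
    have i': "2*r - i < dimV r" "2*r - j < dimV r" by (auto simp: dimV_def)
    show "(l * y - y * l) $$ (2*r-i, j) + (l * y - y * l) $$ (2*r-j, i) = 0"
      unfolding me[OF i'(1) ij(2)] me[OF i'(2) ij(1)]
      using so_mult_sum_reflect[OF l y ij] so_mult_sum_reflect[OF y l ij] by simp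
  qed
qed

definition so_unit :: "nat \<Rightarrow> nat \<Rightarrow> nat \<Rightarrow> complex mat" where
  "so_unit r p q = mat (dimV r) (dimV r) (\<lambda>(i,j). of_bool (i = p \<and> j = q) - of_bool (i = 2*r-q \<and> j = 2*r-p))"

lemma so_unit_carrier[simp]: "so_unit r p q \<in> carrier_mat (dimV r) (dimV r)"
  by (simp add: so_unit_def)

lemma so_unit_dim[simp]: "dim_row (so_unit r p q) = dimV r" "dim_col (so_unit r p q) = dimV r"
  by (simp_all add: so_unit_def)

lemma so_unit_so:
  assumes "p < dimV r" "q < dimV r"
  shows "so_unit r p q \<in> so r"
  unfolding so_iff
proof (intro conjI allI impI)
  show "so_unit r p q \<in> carrier_mat (dimV r) (dimV r)" by (simp add: so_unit_def)
  fix i j assume ij: "i < dimV r" "j < dimV r"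
  have i': "2*r - i < dimV r" "2*r - j < dimV r" by (auto simp: dimV_def)
  have e1: "(2*r-i = p \<and> j = q) = (2*r-j = 2*r-q \<and> i = 2*r-p)"
    using ij assms unfolding dimV_def by linarith
  have e2: "(2*r-i = 2*r-q \<and> j = 2*r-p) = (2*r-j = p \<and> i = q)"
    using ij assms unfolding dimV_def by linarith
  show "so_unit r p q $$ (2*r-i, j) + so_unit r p q $$ (2*r-j, i) = 0"
    using i' ij by (simp add: so_unit_def e1 e2)
qed

lemma so_unit_commutator_index:
  assumes lc: "l \<in> carrier_mat (dimV r) (dimV r)" and pq: "p < dimV r" "q < dimV r"
    and ij: "i < dimV r" "j < dimV r"
  shows "(l * so_unit r p q - so_unit r p q * l) $$ (i,j) =
     l $$ (i,p) * of_bool (j = q) - l $$ (i, 2*r-q) * of_bool (j = 2*r-p)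
     - of_bool (i = p) * l $$ (q,j) + of_bool (i = 2*r-q) * l $$ (2*r-p, j)"
proof -
  have yc: "so_unit r p q \<in> carrier_mat (dimV r) (dimV r)" by simp
  have "(l * so_unit r p q - so_unit r p q * l) $$ (i,j) = (l * so_unit r p q) $$ (i,j) - (so_unit r p q * l) $$ (i,j)"
    using ij lc by (intro index_minus_mat(1)) auto
  also have "(l * so_unit r p q) $$ (i,j) = (\<Sum>k<dimV r. l $$ (i,k) * so_unit r p q $$ (k,j))"
    by (rule index_mult_sum[OF lc yc ij])
  also have "\<dots> = (\<Sum>k<dimV r. (if k = p then l $$ (i,k) * of_bool (j = q) else 0)
       - (if k = 2*r-q then l $$ (i,k) * of_bool (j = 2*r-p) else 0))"
    using ij by (intro sum.cong) (auto simp: so_unit_def)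
  also have "\<dots> = l $$ (i,p) * of_bool (j = q) - l $$ (i, 2*r-q) * of_bool (j = 2*r-p)"
    using pq by (simp add: sum_subtractf sum.delta dimV_def)
  also have "(so_unit r p q * l) $$ (i,j) = (\<Sum>k<dimV r. so_unit r p q $$ (i,k) * l $$ (k,j))"
    by (rule index_mult_sum[OF yc lc ij])
  also have "\<dots> = (\<Sum>k<dimV r. (if k = q then of_bool (i = p) * l $$ (k,j) else 0)
       - (if k = 2*r-p then of_bool (i = 2*r-q) * l $$ (k,j) else 0))"
    using ij by (intro sum.cong) (auto simp: so_unit_def)
  also have "\<dots> = of_bool (i = p) * l $$ (q,j) - of_bool (i = 2*r-q) * l $$ (2*r-p, j)"
    using pq by (simp add: sum_subtractf sum.delta dimV_def)
  finally show ?thesis by simp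
qed

declare so_carrier[simp]

lemma mtrace_mult_sum:
  assumes "A \<in> carrier_mat n n" "B \<in> carrier_mat n n"
  shows "mtrace (A * B) = (\<Sum>i<n. \<Sum>k<n. A $$ (i,k) * B $$ (k,i))"
proof -
  have "\<And>i. i<n \<Longrightarrow> (A*B)$$(i,i) = (\<Sum>k<n. A $$ (i,k) * B $$ (k,i))"
    using index_mult_sum[OF assms] by blast
  thus ?thesis unfolding mtrace_def using assms by simp
qed

lemma mtrace_mult_commute:
  assumes "A \<in> carrier_mat n n" "B \<in> carrier_mat n n"
  shows "mtrace (A * B) = mtrace (B * A)"
  unfolding mtrace_mult_sum[OF assms] mtrace_mult_sum[OF assms(2,1)]
  by (subst sum.swap) (simp add: mult.commute)

lemma ell_expand:
  assumes "a \<in> carrier_mat n n" "L \<in> carrier_mat n n"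
  shows "ell a L = (\<Sum>i<n. \<Sum>k<n. a $$ (i,k) * L $$ (k,i))"
  unfolding ell_def using mtrace_mult_sum[OF assms] .

lemma ell_add_right:
  assumes "a \<in> carrier_mat n n" "X \<in> carrier_mat n n" "Y \<in> carrier_mat n n"
  shows "ell a (X + Y) = ell a X + ell a Y"
  using assms by (simp add: ell_expand[of _ n] distrib_left sum.distrib)

lemma ell_diff_right:
  assumes "a \<in> carrier_mat n n" "X \<in> carrier_mat n n" "Y \<in> carrier_mat n n"
  shows "ell a (X - Y) = ell a X - ell a Y"
proof -
  have m: "X - Y \<in> carrier_mat n n" using assms by auto
  show ?thesis using assms by (simp add: ell_expand[OF assms(1) m] ell_expand[OF assms(1,2)] ell_expand[OF assms(1,3)] right_diff_distrib sum_subtractf)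
qed

lemma ell_diff_left:
  assumes "a \<in> carrier_mat n n" "b \<in> carrier_mat n n" "X \<in> carrier_mat n n"
  shows "ell (a - b) X = ell a X - ell b X"
proof -
  have m: "a - b \<in> carrier_mat n n" using assms by auto
  show ?thesis using assms by (simp add: ell_expand[OF m assms(3)] ell_expand[OF assms(1,3)] ell_expand[OF assms(2,3)] left_diff_distrib sum_subtractf)
qed

lemma ell_smult_left:
  assumes "a \<in> carrier_mat n n" "X \<in> carrier_mat n n"
  shows "ell (k \<cdot>\<^sub>m a) X = k * ell a X"
  using assms by (simp add: ell_expand[of _ n] sum_distrib_left ac_simps)

lemma ell_commutator:
  assumes "a \<in> carrier_mat n n" "y \<in> carrier_mat n n" "X \<in> carrier_mat n n"
  shows "ell (y * a - a * y) X = ell a (X * y - y * X)"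
proof -
  have "ell (y * a - a * y) X = ell (y*a) X - ell (a*y) X"
    using assms by (intro ell_diff_left) auto
  also have "ell (y*a) X = mtrace (y * (a * X))" unfolding ell_def using assms by simp
  also have "\<dots> = mtrace ((a * X) * y)" using assms by (intro mtrace_mult_commute) auto
  also have "\<dots> = ell a (X * y)" unfolding ell_def using assms by simp
  also have "ell (a*y) X = mtrace (a * (y * X))" unfolding ell_def using assms by simp
  also have "\<dots> = ell a (y * X)" unfolding ell_def ..
  also have "ell a (X * y) - ell a (y * X) = ell a (X * y - y * X)"
    using assms by (intro ell_diff_right[symmetric]) auto
  finally show ?thesis .
qed

lemma idx_zero[simp]: "idx r 0 = r" by (simp add: idx_def)

lemma centre_less_dimV[simp]: "r < dimV r" by (simp add: dimV_def)

lemma Emat_carrier[simp]: "Emat r a b \<in> carrier_mat (dimV r) (dimV r)"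
  by (simp add: Emat_def)

lemma ell_Emat:
  assumes "idx r a < dimV r" "idx r b < dimV r" "X \<in> carrier_mat (dimV r) (dimV r)"
  shows "ell (Emat r a b) X = X $$ (idx r b, idx r a)"
proof -
  have "ell (Emat r a b) X = (\<Sum>i<dimV r. \<Sum>k<dimV r. Emat r a b $$ (i,k) * X $$ (k,i))"
    by (rule ell_expand[OF Emat_carrier assms(3)])
  also have "\<dots> = (\<Sum>i<dimV r. if i = idx r a then (\<Sum>k<dimV r. if k = idx r b then X $$ (k,i) else 0) else 0)"
    by (intro sum.cong refl) (simp add: Emat_def if_distrib[where f = "\<lambda>c. c * _"] cong: if_cong)
  also have "\<dots> = X $$ (idx r b, idx r a)" using assms by (simp add: sum.delta)
  finally show ?thesis .
qed

lemma epp_carrier[simp]: "epp r i j \<in> carrier_mat (dimV r) (dimV r)"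
  by (simp add: epp_def)

lemma esh_carrier[simp]: "esh r i \<in> carrier_mat (dimV r) (dimV r)"
  by (simp add: esh_def)

lemma ell_epp:
  assumes "idx r i < dimV r" "idx r j < dimV r" "idx r (-i) < dimV r" "idx r (-j) < dimV r"
    "X \<in> carrier_mat (dimV r) (dimV r)"
  shows "ell (epp r i j) X = (if (i, j) = (2, 3) then -1 else 1) * (X $$ (idx r (-j), idx r i) - X $$ (idx r (-i), idx r j))"
proof -
  let ?k = "(if (i, j) = (2, 3) then -1 else 1) :: complex"
  have "ell (epp r i j) X = ?k * ell (Emat r i (-j) - Emat r j (-i)) X"
    unfolding epp_def by (rule ell_smult_left[OF _ assms(5)]) simp
  also have "ell (Emat r i (-j) - Emat r j (-i)) X = ell (Emat r i (-j)) X - ell (Emat r j (-i)) X"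
    by (rule ell_diff_left[OF _ _ assms(5)]) simp_all
  finally show ?thesis using assms by (simp add: ell_Emat)
qed

lemma ell_esh:
  assumes "idx r i < dimV r" "idx r (-i) < dimV r" "X \<in> carrier_mat (dimV r) (dimV r)"
  shows "ell (esh r i) X = X $$ (idx r 0, idx r i) - X $$ (idx r (-i), idx r 0)"
proof -
  have "ell (esh r i) X = ell (Emat r i 0) X - ell (Emat r 0 (-i)) X"
    unfolding esh_def by (rule ell_diff_left[OF _ _ assms(3)]) simp_all
  thus ?thesis using assms ell_Emat[of r i 0 X] ell_Emat[of r 0 "-i" X] by simp
qed

lemma idx_small:
  assumes "r \<ge> 4"
  shows "idx r 1 = 0" "idx r 2 = 1" "idx r 3 = 2" "idx r 4 = 3"
    "idx r (-1) = 2*r" "idx r (-2) = 2*r - 1" "idx r (-3) = 2*r - 2" "idx r (-4) = 2*r - 3"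
  using assms by (auto simp: idx_def nat_diff_distrib)

lemma idx_less_dimV: "k \<le> int (2*r+1) \<Longrightarrow> idx r k < dimV r"
  by (auto simp: idx_def dimV_def)

definition sym2_carrier :: "nat \<Rightarrow> sym2 \<Rightarrow> bool" where
  "sym2_carrier r s \<longleftrightarrow> (\<forall>(c,a,b) \<in> set s. a \<in> carrier_mat (dimV r) (dimV r) \<and> b \<in> carrier_mat (dimV r) (dimV r))"

definition polar2 :: "sym2 \<Rightarrow> complex mat \<Rightarrow> complex mat \<Rightarrow> complex" where
  "polar2 s X Y = (\<Sum>(c, a, b) \<leftarrow> s. c * (ell a X * ell b Y + ell a Y * ell b X))"

lemma eval2_Nil[simp]: "eval2 [] X = 0" by (simp add: eval2_def)

lemma eval2_Cons[simp]: "eval2 ((c,a,b) # s) X = c * ell a X * ell b X + eval2 s X"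
  by (simp add: eval2_def)

lemma eval2_append[simp]: "eval2 (s @ t) X = eval2 s X + eval2 t X"
  by (simp add: eval2_def)

lemma polar2_Nil[simp]: "polar2 [] X Y = 0" by (simp add: polar2_def)

lemma polar2_Cons[simp]: "polar2 ((c,a,b) # s) X Y = c * (ell a X * ell b Y + ell a Y * ell b X) + polar2 s X Y"
  by (simp add: polar2_def)

lemma sym2_carrier_Cons[simp]: "sym2_carrier r ((c,a,b) # s) \<longleftrightarrow> a \<in> carrier_mat (dimV r) (dimV r) \<and> b \<in> carrier_mat (dimV r) (dimV r) \<and> sym2_carrier r s"
  by (simp add: sym2_carrier_def)

lemma sym2_carrier_append[simp]: "sym2_carrier r (s @ t) \<longleftrightarrow> sym2_carrier r s \<and> sym2_carrier r t"
  unfolding sym2_carrier_def set_append ball_Un by blast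

lemma sym2_carrier_Nil[simp]: "sym2_carrier r []" by (simp add: sym2_carrier_def)

lemma sym2_carrier_smult: "sym2_carrier r s \<Longrightarrow> sym2_carrier r (map (\<lambda>(c, a, b). (k * c, a, b)) s)"
  unfolding sym2_carrier_def by auto

lemma eval2_smult: "eval2 (map (\<lambda>(c, a, b). (k * c, a, b)) s) X = k * eval2 s X"
  by (induction s) (auto simp: algebra_simps)

lemma eval2_add_polar:
  assumes "sym2_carrier r s" "X \<in> carrier_mat (dimV r) (dimV r)" "Y \<in> carrier_mat (dimV r) (dimV r)"
  shows "eval2 s (X + Y) = eval2 s X + eval2 s Y + polar2 s X Y"
  using assms by (induction s rule: list.induct) (auto simp: ell_add_right[of _ "dimV r"] algebra_simps)

lemma polar2_add_right:
  assumes "sym2_carrier r s" "X \<in> carrier_mat (dimV r) (dimV r)" "Y \<in> carrier_mat (dimV r) (dimV r)" "Z \<in> carrier_mat (dimV r) (dimV r)"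
  shows "polar2 s X (Y + Z) = polar2 s X Y + polar2 s X Z"
  using assms by (induction s rule: list.induct) (auto simp: ell_add_right[of _ "dimV r"] algebra_simps)

lemma act_Cons[simp]: "act y ((c,a,b) # s) = [(c, y * a - a * y, b), (c, a, y * b - b * y)] @ act y s"
  by (simp add: act_def)

lemma act_Nil[simp]: "act y [] = []" by (simp add: act_def)

lemma eval2_act_polar:
  assumes "sym2_carrier r s" "y \<in> carrier_mat (dimV r) (dimV r)" "X \<in> carrier_mat (dimV r) (dimV r)"
  shows "eval2 (act y s) X = polar2 s X (X * y - y * X)"
  using assms by (induction s rule: list.induct) (auto simp: ell_commutator[of _ "dimV r"] algebra_simps)

lemma sym2_carrier_act:
  assumes "sym2_carrier r s" "y \<in> carrier_mat (dimV r) (dimV r)"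
  shows "sym2_carrier r (act y s)"
  using assms by (induction s rule: list.induct) (auto intro!: minus_carrier_mat mult_carrier_mat)

section \<open>Decomposable elements\<close>

definition bform :: "nat \<Rightarrow> (nat \<Rightarrow> complex) \<Rightarrow> (nat \<Rightarrow> complex) \<Rightarrow> complex" where
  "bform r x y = (\<Sum>k<dimV r. x k * y (2*r - k))"

abbreviation unit_vec :: "nat \<Rightarrow> nat \<Rightarrow> complex" where
  "unit_vec j \<equiv> \<lambda>k. of_bool (k = j)"

lemma bform_sym: "bform r x y = bform r y x"
proof -
  have "bform r x y = (\<Sum>k<dimV r. x (2*r - (2*r - k)) * y (2*r - k))"
    unfolding bform_def by (intro sum.cong) (auto simp: dimV_def)
  also have "\<dots> = (\<Sum>k<dimV r. x (2*r - k) * y k)"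
    by (rule sum_reflect_index[where f="\<lambda>k. x (2*r - k) * y k"])
  finally show ?thesis unfolding bform_def by (simp add: mult.commute)
qed

lemma bform_cong: "(\<And>k. k < dimV r \<Longrightarrow> x k = x' k) \<Longrightarrow> (\<And>k. k < dimV r \<Longrightarrow> y k = y' k) \<Longrightarrow> bform r x y = bform r x' y'"
  unfolding bform_def by (intro sum.cong) (auto simp: dimV_def)

lemma bform_lin_left: "bform r (\<lambda>i. a * x i + b * y i) z = a * bform r x z + b * bform r y z"
  unfolding bform_def by (simp add: sum.distrib sum_distrib_left algebra_simps)

lemma bform_lin_right: "bform r z (\<lambda>i. a * x i + b * y i) = a * bform r z x + b * bform r z y"
  using bform_lin_left[of r a x b y z] bform_sym[of r z] by (metis bform_sym)

lemma bform_diff_smult_left: "bform r (\<lambda>i. x i - b * y i) z = bform r x z - b * bform r y z"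
  unfolding bform_def by (simp add: sum_subtractf sum_distrib_left algebra_simps)

lemma bform_diff_smult_right: "bform r z (\<lambda>i. x i - b * y i) = bform r z x - b * bform r z y"
  using bform_diff_smult_left[of r x b y z] by (metis bform_sym)

lemma bform_add_left: "bform r (\<lambda>i. x i + y i) z = bform r x z + bform r y z"
  unfolding bform_def by (simp add: sum.distrib algebra_simps)

lemma bform_add_right: "bform r z (\<lambda>i. x i + y i) = bform r z x + bform r z y"
  using bform_add_left[of r x y z] by (metis bform_sym)

lemma bform_diff_left: "bform r (\<lambda>i. x i - y i) z = bform r x z - bform r y z"
  unfolding bform_def by (simp add: sum_subtractf algebra_simps)

lemma bform_diff_right: "bform r z (\<lambda>i. x i - y i) = bform r z x - bform r z y"
  using bform_diff_left[of r x y z] by (metis bform_sym)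

lemma bform_uminus_left: "bform r (\<lambda>i. - x i) z = - bform r x z"
  unfolding bform_def by (simp add: sum_negf)

lemma bform_lin_both:
  "bform r (\<lambda>i. al * u i + be * w i) (\<lambda>i. ga * u i + de * w i)
     = al * ga * bform r u u + (al * de + be * ga) * bform r u w + be * de * bform r w w"
  by (simp add: bform_lin_left bform_lin_right bform_sym[of r w u] algebra_simps)

lemma bform_unit: "i < dimV r \<Longrightarrow> bform r (unit_vec i) y = y (2*r - i)"
  unfolding bform_def by (simp add: sum.delta)

definition mvec :: "nat \<Rightarrow> complex mat \<Rightarrow> (nat \<Rightarrow> complex) \<Rightarrow> nat \<Rightarrow> complex" where
  "mvec r y u i = (\<Sum>k<dimV r. y $$ (i,k) * u k)"

lemma mvec_cong: "(\<And>k. k < dimV r \<Longrightarrow> x k = x' k) \<Longrightarrow> mvec r g x i = mvec r g x' i"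
  unfolding mvec_def by (intro sum.cong) auto

lemma mvec_unit: "j < dimV r \<Longrightarrow> mvec r g (unit_vec j) i = g $$ (i, j)"
  unfolding mvec_def by (simp add: sum.delta)

lemma mvec_lin: "mvec r g (\<lambda>k. a * x k + b * y k) i = a * mvec r g x i + b * mvec r g y i"
  unfolding mvec_def by (simp add: sum.distrib sum_distrib_left algebra_simps)

lemma mvec_mult:
  assumes "g \<in> carrier_mat (dimV r) (dimV r)" "h \<in> carrier_mat (dimV r) (dimV r)" "i < dimV r"
  shows "mvec r (g * h) x i = mvec r g (mvec r h x) i"
proof -
  have "mvec r (g * h) x i = (\<Sum>k<dimV r. (\<Sum>m<dimV r. g $$ (i,m) * h $$ (m,k)) * x k)"
  proof -
    have e: "\<And>k. k < dimV r \<Longrightarrow> (g*h)$$(i,k) = (\<Sum>m<dimV r. g$$(i,m) * h$$(m,k))"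
      using index_mult_sum[OF assms(1,2) assms(3)] by blast
    show ?thesis unfolding mvec_def by (intro sum.cong refl) (auto simp del: index_mult_mat simp: e)
  qed
  also have "\<dots> = (\<Sum>k<dimV r. \<Sum>m<dimV r. g $$ (i,m) * (h $$ (m,k) * x k))"
    by (simp add: sum_distrib_right mult.assoc)
  also have "\<dots> = (\<Sum>m<dimV r. \<Sum>k<dimV r. g $$ (i,m) * (h $$ (m,k) * x k))"
    by (rule sum.swap)
  also have "\<dots> = (\<Sum>m<dimV r. g $$ (i,m) * (\<Sum>k<dimV r. h $$ (m,k) * x k))"
    by (simp add: sum_distrib_left)
  finally show ?thesis by (simp add: mvec_def)
qed

text \<open>The decomposable element \<open>u \<and> w\<close> of \<open>\<Lambda>\<^sup>2 V = so\<^sub>2\<^sub>r\<^sub>+\<^sub>1\<close>, i.e. the operator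
  \<open>x \<mapsto> B(x,w) u - B(x,u) w\<close>.\<close>

definition wedge :: "nat \<Rightarrow> (nat \<Rightarrow> complex) \<Rightarrow> (nat \<Rightarrow> complex) \<Rightarrow> complex mat" where
  "wedge r u w = mat (dimV r) (dimV r) (\<lambda>(i,j). u i * w (2*r-j) - w i * u (2*r-j))"

lemma wedge_carrier[simp]: "wedge r u w \<in> carrier_mat (dimV r) (dimV r)"
  by (simp add: wedge_def)

lemma wedge_dim[simp]: "dim_row (wedge r u w) = dimV r" "dim_col (wedge r u w) = dimV r"
  by (simp_all add: wedge_def)

lemma wedge_index[simp]: "i < dimV r \<Longrightarrow> j < dimV r \<Longrightarrow> wedge r u w $$ (i,j) = u i * w (2*r-j) - w i * u (2*r-j)"
  by (simp add: wedge_def)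

lemma wedge_cong: "(\<And>k. k < dimV r \<Longrightarrow> u k = u' k) \<Longrightarrow> (\<And>k. k < dimV r \<Longrightarrow> w k = w' k) \<Longrightarrow> wedge r u w = wedge r u' w'"
  by (rule eq_matI) (auto simp: dimV_def)

lemma wedge_add_right: "wedge r u w + wedge r u w' = wedge r u (\<lambda>i. w i + w' i)"
  by (rule eq_matI) (auto simp: algebra_simps)

lemma wedge_add_left: "wedge r u w + wedge r u' w = wedge r (\<lambda>i. u i + u' i) w"
  by (rule eq_matI) (auto simp: algebra_simps)

lemma wedge_swap: "wedge r u w = (-1) \<cdot>\<^sub>m wedge r w u"
  by (rule eq_matI) auto

lemma smult_zero_wedge: "0 \<cdot>\<^sub>m wedge r u w = 0\<^sub>m (dimV r) (dimV r)"
  by (rule eq_matI) auto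

lemma wedge_reparam:
  assumes "k * (al * de - be * ga) = 1"
  shows "wedge r u w = k \<cdot>\<^sub>m wedge r (\<lambda>i. al * u i + be * w i) (\<lambda>i. ga * u i + de * w i)"
proof (rule eq_matI)
  fix i j assume "i < dim_row (k \<cdot>\<^sub>m wedge r (\<lambda>i. al * u i + be * w i) (\<lambda>i. ga * u i + de * w i))"
    "j < dim_col (k \<cdot>\<^sub>m wedge r (\<lambda>i. al * u i + be * w i) (\<lambda>i. ga * u i + de * w i))"
  hence ij: "i < dimV r" "j < dimV r" by auto
  have "k * ((al * u i + be * w i) * (ga * u (2*r-j) + de * w (2*r-j)) - (ga * u i + de * w i) * (al * u (2*r-j) + be * w (2*r-j)))
     = (k * (al * de - be * ga)) * (u i * w (2*r-j) - w i * u (2*r-j))" by (simp add: algebra_simps)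
  thus "wedge r u w $$ (i,j) = (k \<cdot>\<^sub>m wedge r (\<lambda>i. al * u i + be * w i) (\<lambda>i. ga * u i + de * w i)) $$ (i,j)"
    using ij assms by simp
qed auto

lemma wedge_so: "wedge r u w \<in> so r"
  unfolding so_iff by (auto simp: dimV_def algebra_simps)

lemma wedge_mult_index:
  assumes N: "N \<in> carrier_mat (dimV r) (dimV r)" and ij: "i < dimV r" "j < dimV r"
  shows "(wedge r u w * N) $$ (i,j) = u i * (\<Sum>k<dimV r. w (2*r-k) * N $$ (k,j)) - w i * (\<Sum>k<dimV r. u (2*r-k) * N $$ (k,j))"
proof -
  have "(wedge r u w * N) $$ (i,j) = (\<Sum>k<dimV r. (u i * w (2*r-k) - w i * u (2*r-k)) * N $$ (k,j))"
    using N ij by (subst index_mult_sum[of _ "dimV r" "dimV r" _ "dimV r"]) auto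
  also have "\<dots> = (\<Sum>k<dimV r. u i * (w (2*r-k) * N $$ (k,j)) - w i * (u (2*r-k) * N $$ (k,j)))"
    by (intro sum.cong refl) (simp add: algebra_simps)
  also have "\<dots> = u i * (\<Sum>k<dimV r. w (2*r-k) * N $$ (k,j)) - w i * (\<Sum>k<dimV r. u (2*r-k) * N $$ (k,j))"
    by (simp add: sum_subtractf sum_distrib_left)
  finally show ?thesis .
qed

lemma sum_reflect_wedge_combination: "(\<Sum>k<dimV r. x (2*r-k) * (u k * A - w k * B)) = bform r u x * A - bform r w x * B"
proof -
  have "(\<Sum>k<dimV r. x (2*r-k) * (u k * A - w k * B)) = (\<Sum>k<dimV r. (u k * x (2*r-k)) * A - (w k * x (2*r-k)) * B)"
    by (intro sum.cong refl) (simp add: algebra_simps)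
  also have "\<dots> = bform r u x * A - bform r w x * B" by (simp add: sum_subtractf sum_distrib_right bform_def)
  finally show ?thesis .
qed

lemma wedge_mult_column_in_span:
  assumes N: "N \<in> carrier_mat (dimV r) (dimV r)" and ij: "i < dimV r" "j < dimV r"
    and col: "\<And>k. k < dimV r \<Longrightarrow> N $$ (k,j) = u k * P - w k * Q"
  shows "(wedge r u w * N) $$ (i,j)
    = u i * (bform r u w * P - bform r w w * Q) - w i * (bform r u u * P - bform r w u * Q)"
proof -
  have "(wedge r u w * N) $$ (i,j)
      = u i * (\<Sum>k<dimV r. w (2*r-k) * N $$ (k,j)) - w i * (\<Sum>k<dimV r. u (2*r-k) * N $$ (k,j))"
    by (rule wedge_mult_index[OF N ij])
  also have "\<dots> = u i * (\<Sum>k<dimV r. w (2*r-k) * (u k * P - w k * Q))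
      - w i * (\<Sum>k<dimV r. u (2*r-k) * (u k * P - w k * Q))"
    using col by simp
  finally show ?thesis by (simp only: sum_reflect_wedge_combination)
qed

lemma wedge_square_index:
  assumes ij: "i < dimV r" "j < dimV r"
  shows "(wedge r u w * wedge r u w) $$ (i,j)
    = u i * (bform r u w * w (2*r-j) - bform r w w * u (2*r-j))
      - w i * (bform r u u * w (2*r-j) - bform r u w * u (2*r-j))"
  using wedge_mult_column_in_span[OF wedge_carrier ij, where P = "w (2*r-j)" and Q = "u (2*r-j)"] ij
  by (simp add: bform_sym[of r w u])

lemma wedge_cube:
  "wedge r u w * wedge r u w * wedge r u w = (bform r u w * bform r u w - bform r u u * bform r w w) \<cdot>\<^sub>m wedge r u w"
proof (rule eq_matI)
  let ?a = "bform r u u" and ?b = "bform r u w" and ?c = "bform r w w"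
  fix i j assume "i < dim_row ((?b * ?b - ?a * ?c) \<cdot>\<^sub>m wedge r u w)" "j < dim_col ((?b * ?b - ?a * ?c) \<cdot>\<^sub>m wedge r u w)"
  hence ij: "i < dimV r" "j < dimV r" by auto
  have "(wedge r u w * wedge r u w * wedge r u w) $$ (i,j) = (wedge r u w * (wedge r u w * wedge r u w)) $$ (i,j)"
    by (simp add: assoc_mult_mat[OF wedge_carrier wedge_carrier wedge_carrier])
  also have "\<dots> = u i * (?b * (?b * w (2*r-j) - ?c * u (2*r-j)) - ?c * (?a * w (2*r-j) - ?b * u (2*r-j)))
      - w i * (?a * (?b * w (2*r-j) - ?c * u (2*r-j)) - bform r w u * (?a * w (2*r-j) - ?b * u (2*r-j)))"
    by (rule wedge_mult_column_in_span[OF mult_carrier_mat[OF wedge_carrier wedge_carrier] ij])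
      (use ij in \<open>simp add: wedge_square_index del: index_mult_mat\<close>)
  also have "\<dots> = ((?b * ?b - ?a * ?c) \<cdot>\<^sub>m wedge r u w) $$ (i,j)"
    using ij by (simp add: bform_sym[of r w u] algebra_simps)
  finally show "(wedge r u w * wedge r u w * wedge r u w) $$ (i,j) = ((?b * ?b - ?a * ?c) \<cdot>\<^sub>m wedge r u w) $$ (i,j)" .
qed auto

lemma so_sum_reflect_index:
  assumes "y \<in> so r" "j < dimV r"
  shows "(\<Sum>k<dimV r. x (2*r-k) * y $$ (k, j)) = - mvec r y x (2*r - j)"
proof -
  have "(\<Sum>k<dimV r. x (2*r-k) * y $$ (k, j)) = (\<Sum>k<dimV r. - (y $$ (2*r-j, 2*r-k) * x (2*r-k)))"
    using assms by (intro sum.cong) (auto simp: so_index_reflect[OF assms(1) _ assms(2)])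
  also have "\<dots> = (\<Sum>k<dimV r. - (y $$ (2*r-j, k) * x k))"
    by (rule sum_reflect_index[where f="\<lambda>k. - (y $$ (2*r-j, k) * x k)"])
  also have "\<dots> = - mvec r y x (2*r - j)" by (simp add: mvec_def sum_negf)
  finally show ?thesis .
qed

lemma wedge_commutator:
  assumes y: "y \<in> so r"
  shows "wedge r u w * y - y * wedge r u w = wedge r u (\<lambda>i. - mvec r y w i) + wedge r (\<lambda>i. - mvec r y u i) w"
proof (rule eq_matI)
  have yc: "y \<in> carrier_mat (dimV r) (dimV r)" using y by simp
  fix i j assume "i < dim_row (wedge r u (\<lambda>i. - mvec r y w i) + wedge r (\<lambda>i. - mvec r y u i) w)"
    "j < dim_col (wedge r u (\<lambda>i. - mvec r y w i) + wedge r (\<lambda>i. - mvec r y u i) w)"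
  hence ij: "i < dimV r" "j < dimV r" by auto
  have Wy: "(wedge r u w * y) $$ (i,j) = - u i * mvec r y w (2*r-j) + w i * mvec r y u (2*r-j)"
    unfolding wedge_mult_index[OF yc ij] so_sum_reflect_index[OF y ij(2)] by simp
  have yW: "(y * wedge r u w) $$ (i,j) = mvec r y u i * w (2*r-j) - mvec r y w i * u (2*r-j)"
    unfolding index_mult_sum[OF yc wedge_carrier ij] using ij
    by (simp only: mvec_def sum_distrib_right sum_subtractf[symmetric]) (auto intro!: sum.cong simp: algebra_simps)
  have "(wedge r u w * y - y * wedge r u w) $$ (i, j) = (wedge r u w * y) $$ (i,j) - (y * wedge r u w) $$ (i,j)"
    using ij yc by (intro index_minus_mat(1)) auto
  also have "\<dots> = (wedge r u (\<lambda>i. - mvec r y w i) + wedge r (\<lambda>i. - mvec r y u i) w) $$ (i, j)"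
    unfolding Wy yW using ij by (simp add: dimV_def algebra_simps)
  finally show "(wedge r u w * y - y * wedge r u w) $$ (i, j) =
      (wedge r u (\<lambda>i. - mvec r y w i) + wedge r (\<lambda>i. - mvec r y u i) w) $$ (i, j)" .
qed (use so_carrier[OF y] in auto)

text \<open>The entries of the skew-symmetric matrix \<open>J l\<close> attached to \<open>l \<in> so r\<close>.\<close>

definition skew_coord :: "nat \<Rightarrow> complex mat \<Rightarrow> nat \<Rightarrow> nat \<Rightarrow> complex" where
  "skew_coord r l i j = l $$ (2*r - i, j)"

text \<open>The Pfaffian of the principal \<open>4 \<times> 4\<close> submatrix of \<open>J l\<close> on \<open>a, b, c, d\<close>; these are the
  Pluecker quadrics cutting out the decomposable elements.\<close>

definition pfaff4 :: "nat \<Rightarrow> nat \<Rightarrow> nat \<Rightarrow> nat \<Rightarrow> nat \<Rightarrow> complex mat \<Rightarrow> complex" where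
  "pfaff4 r a b c d l = skew_coord r l a b * skew_coord r l c d - skew_coord r l a c * skew_coord r l b d + skew_coord r l a d * skew_coord r l b c"

lemma skew_coord_antisym: "l \<in> so r \<Longrightarrow> i < dimV r \<Longrightarrow> j < dimV r \<Longrightarrow> skew_coord r l i j = - skew_coord r l j i"
  unfolding skew_coord_def by (rule so_skew)

lemma skew_coord_diag: "l \<in> so r \<Longrightarrow> i < dimV r \<Longrightarrow> skew_coord r l i i = 0"
  using skew_coord_antisym[of l r i i] by simp

lemma skew_coord_add: "l \<in> carrier_mat (dimV r) (dimV r) \<Longrightarrow> m \<in> carrier_mat (dimV r) (dimV r) \<Longrightarrow>
   i < dimV r \<Longrightarrow> j < dimV r \<Longrightarrow> skew_coord r (l + m) i j = skew_coord r l i j + skew_coord r m i j"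
  unfolding skew_coord_def by (subst index_add_mat(1)) (auto simp: dimV_def)

lemma pfaff4_repeated_index:
  assumes l: "l \<in> so r" and lt: "a < dimV r" "b < dimV r" "c < dimV r" "d < dimV r"
    and nd: "\<not> (a \<noteq> b \<and> a \<noteq> c \<and> a \<noteq> d \<and> b \<noteq> c \<and> b \<noteq> d \<and> c \<noteq> d)"
  shows "pfaff4 r a b c d l = 0"
proof -
  note sk = skew_coord_antisym[OF l] and dg = skew_coord_diag[OF l]
  consider "a = b" | "a = c" | "a = d" | "b = c" | "b = d" | "c = d" using nd by blast
  thus ?thesis
  proof cases
    case 1 thus ?thesis using dg[OF lt(1)] by (simp add: pfaff4_def)
  next
    case 2 thus ?thesis using dg[OF lt(1)] sk[OF lt(2,1)] by (simp add: pfaff4_def)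
  next
    case 3 thus ?thesis using dg[OF lt(1)] sk[OF lt(2,1)] sk[OF lt(3,1)] by (simp add: pfaff4_def)
  next
    case 4 thus ?thesis using dg[OF lt(2)] by (simp add: pfaff4_def)
  next
    case 5 thus ?thesis using dg[OF lt(2)] sk[OF lt(3,2)] by (simp add: pfaff4_def)
  next
    case 6 thus ?thesis using dg[OF lt(3)] by (simp add: pfaff4_def)
  qed
qed

lemma pfaff4_wedge: "a < dimV r \<Longrightarrow> b < dimV r \<Longrightarrow> c < dimV r \<Longrightarrow> d < dimV r \<Longrightarrow> pfaff4 r a b c d (wedge r u w) = 0"
proof -
  assume lt: "a < dimV r" "b < dimV r" "c < dimV r" "d < dimV r"
  have "\<And>x. x < dimV r \<Longrightarrow> 2*r - x < dimV r" by (simp add: dimV_def)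
  with lt show ?thesis by (simp add: pfaff4_def skew_coord_def algebra_simps)
qed

lemma eval2_w2_pfaff4:
  assumes r: "r \<ge> 3" and l: "l \<in> so r"
  shows "eval2 (w2 r) l = 4 * pfaff4 r 0 1 2 3 l"
proof -
  have lc: "l \<in> carrier_mat (dimV r) (dimV r)" using l by simp
  have h: "\<And>i j. i < dimV r \<Longrightarrow> j < dimV r \<Longrightarrow> l $$ (2*r - i, j) = - l $$ (2*r - j, i)"
    using so_skew[OF l] .
  show ?thesis
  proof (cases "r = 3")
    case True
    show ?thesis using lc h[of 1 0] h[of 3 2] h[of 3 1] h[of 2 0] h[of 2 1] h[of 3 0] unfolding True
      apply (simp add: w2_def)
      apply (simp add: ell_epp ell_esh idx_less_dimV)
      apply (simp add: idx_def dimV_def pfaff4_def skew_coord_def)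
      done
  next
    case False
    hence r4: "r \<ge> 4" using r by simp
    show ?thesis using lc r4 h[of 1 0] h[of 3 2] h[of 3 1] h[of 2 0] h[of 2 1] h[of 3 0]
      apply (simp add: w2_def)
      apply (simp add: ell_epp idx_less_dimV)
      apply (simp add: idx_small[OF r4] dimV_def pfaff4_def skew_coord_def)
      done
  qed
qed

section \<open>W_2 vanishes on decomposable elements\<close>

lemma polar2_wedge_right:
  assumes "sym2_carrier r s" "\<forall>u w. eval2 s (wedge r u w) = 0"
  shows "polar2 s (wedge r u w) (wedge r u w') = 0"
  using eval2_add_polar[OF assms(1) wedge_carrier wedge_carrier, of u w u w'] assms(2)
  by (simp add: wedge_add_right)

lemma polar2_wedge_left:
  assumes "sym2_carrier r s" "\<forall>u w. eval2 s (wedge r u w) = 0"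
  shows "polar2 s (wedge r u w) (wedge r u' w) = 0"
  using eval2_add_polar[OF assms(1) wedge_carrier wedge_carrier, of u w u' w] assms(2)
  by (simp add: wedge_add_left)

lemma act_vanish_on_wedges:
  assumes "sym2_carrier r s" "\<forall>u w. eval2 s (wedge r u w) = 0" "y \<in> so r"
  shows "eval2 (act y s) (wedge r u w) = 0"
proof -
  have yc: "y \<in> carrier_mat (dimV r) (dimV r)" using so_carrier[OF assms(3)] .
  have "eval2 (act y s) (wedge r u w) = polar2 s (wedge r u w) (wedge r u w * y - y * wedge r u w)"
    by (rule eval2_act_polar[OF assms(1) yc wedge_carrier])
  also have "\<dots> = polar2 s (wedge r u w) (wedge r u (\<lambda>i. - mvec r y w i)) + polar2 s (wedge r u w) (wedge r (\<lambda>i. - mvec r y u i) w)"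
    unfolding wedge_commutator[OF assms(3)] by (rule polar2_add_right[OF assms(1)]) auto
  also have "\<dots> = 0" using polar2_wedge_left[OF assms(1,2)] polar2_wedge_right[OF assms(1,2)] by simp
  finally show ?thesis .
qed

lemma w2_carrier: "sym2_carrier r (w2 r)"
  by (simp add: w2_def)

lemma w2_vanish_on_wedges: "r \<ge> 3 \<Longrightarrow> eval2 (w2 r) (wedge r u w) = 0"
  using eval2_w2_pfaff4[OF _ wedge_so] pfaff4_wedge by (simp add: dimV_def)

lemma W2mod_vanish_on_wedges:
  assumes "s \<in> W2mod r" "r \<ge> 3"
  shows "sym2_carrier r s \<and> (\<forall>u w. eval2 s (wedge r u w) = 0)"
  using assms(1)
proof (induction rule: W2mod.induct)
  case gen
  show ?case using w2_carrier w2_vanish_on_wedges[OF assms(2)] by simp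
next
  case zero thus ?case by simp
next
  case (add s t) thus ?case by simp
next
  case (smult s k)
  from smult.IH have c: "sym2_carrier r s" and v: "\<forall>u w. eval2 s (wedge r u w) = 0" by auto
  show ?case using sym2_carrier_smult[OF c, of k] eval2_smult[of k s] v by simp
next
  case (act y s) thus ?case using sym2_carrier_act so_carrier act_vanish_on_wedges by blast
qed

lemma wedge_VW2: "r \<ge> 3 \<Longrightarrow> wedge r u w \<in> VW2 r"
  unfolding VW2_def using wedge_so W2mod_vanish_on_wedges by blast

section \<open>The 4-Pfaffians lie in W_2\<close>

definition so_unit_comm_coord :: "nat \<Rightarrow> complex mat \<Rightarrow> nat \<Rightarrow> nat \<Rightarrow> nat \<Rightarrow> nat \<Rightarrow> complex" where
  "so_unit_comm_coord r l p q i j = skew_coord r l i p * of_bool (j = q) - skew_coord r l i (2*r - q) * of_bool (j = 2*r - p)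
     - of_bool (i = 2*r - p) * skew_coord r l (2*r - q) j + of_bool (i = q) * skew_coord r l p j"

lemma skew_coord_so_unit_commutator:
  assumes lc: "l \<in> carrier_mat (dimV r) (dimV r)" and pq: "p < dimV r" "q < dimV r"
    and ij: "i < dimV r" "j < dimV r"
  shows "skew_coord r (l * so_unit r p q - so_unit r p q * l) i j = so_unit_comm_coord r l p q i j"
proof -
  have i': "2*r - i < dimV r" by (auto simp: dimV_def)
  have e1: "(2*r - i = p) = (i = 2*r - p)" "(2*r - i = 2*r - q) = (i = q)"
    using ij pq by (auto simp: dimV_def)
  have e2: "2*r - (2*r - q) = q" "2*r - (2*r - p) = p" using pq by (auto simp: dimV_def)
  show ?thesis
    unfolding skew_coord_def so_unit_comm_coord_def so_unit_commutator_index[OF lc pq i' ij(2)] e1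
    using e2 by simp
qed

lemma pfaff_polar_expand:
  fixes x1 x2 x3 x4 x5 x6 y1 y2 y3 y4 y5 y6 :: complex
  shows "(x1+y1)*(x2+y2) - (x3+y3)*(x4+y4) + (x5+y5)*(x6+y6) - (x1*x2 - x3*x4 + x5*x6) - (y1*y2 - y3*y4 + y5*y6)
    = x1*y2 + y1*x2 - x3*y4 - y3*x4 + x5*y6 + y5*x6"
  by (simp add: algebra_simps)

lemma pfaff4_polarization:
  assumes lc: "l \<in> carrier_mat (dimV r) (dimV r)" and pq: "p < dimV r" "q < dimV r"
    and abcd: "a < dimV r" "b < dimV r" "c < dimV r" "d < dimV r"
  defines "m \<equiv> l * so_unit r p q - so_unit r p q * l"
  shows "pfaff4 r a b c d (l + m) - pfaff4 r a b c d l - pfaff4 r a b c d m =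
     skew_coord r l a b * so_unit_comm_coord r l p q c d + so_unit_comm_coord r l p q a b * skew_coord r l c d
   - skew_coord r l a c * so_unit_comm_coord r l p q b d - so_unit_comm_coord r l p q a c * skew_coord r l b d
   + skew_coord r l a d * so_unit_comm_coord r l p q b c + so_unit_comm_coord r l p q a d * skew_coord r l b c"
proof -
  have mc: "m \<in> carrier_mat (dimV r) (dimV r)" unfolding m_def using lc
    by (intro minus_carrier_mat mult_carrier_mat) auto
  have A: "\<And>i j. i < dimV r \<Longrightarrow> j < dimV r \<Longrightarrow> skew_coord r m i j = so_unit_comm_coord r l p q i j"
    unfolding m_def by (rule skew_coord_so_unit_commutator[OF lc pq])
  note B = skew_coord_add[OF lc mc]
  show ?thesis unfolding pfaff4_def B[OF abcd(1,2)] B[OF abcd(3,4)] B[OF abcd(1,3)] B[OF abcd(2,4)]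
      B[OF abcd(1,4)] B[OF abcd(2,3)] A[OF abcd(1,2)] A[OF abcd(3,4)] A[OF abcd(1,3)] A[OF abcd(2,4)]
      A[OF abcd(1,4)] A[OF abcd(2,3)]
    by (rule pfaff_polar_expand)
qed

definition W2_funs :: "nat \<Rightarrow> (complex mat \<Rightarrow> complex) set" where
  "W2_funs r = {f. \<exists>s\<in>W2mod r. \<forall>l\<in>so r. eval2 s l = f l}"

lemma W2_funs_cong: "f \<in> W2_funs r \<Longrightarrow> (\<And>l. l \<in> so r \<Longrightarrow> f l = g l) \<Longrightarrow> g \<in> W2_funs r"
  unfolding W2_funs_def by auto

lemma W2_funs_smult: "f \<in> W2_funs r \<Longrightarrow> (\<lambda>l. k * f l) \<in> W2_funs r"
proof -
  assume "f \<in> W2_funs r"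
  then obtain s where s: "s \<in> W2mod r" "\<forall>l\<in>so r. eval2 s l = f l" unfolding W2_funs_def by auto
  have "map (\<lambda>(c, a, b). (k * c, a, b)) s \<in> W2mod r" using s(1) by (rule W2mod.smult)
  moreover have "\<forall>l\<in>so r. eval2 (map (\<lambda>(c, a, b). (k * c, a, b)) s) l = k * f l"
    using s(2) eval2_smult by simp
  ultimately show ?thesis unfolding W2_funs_def by blast
qed

text \<open>For a quadratic function \<open>f\<close>, the derivation action of \<open>y\<close> is the polarization of \<open>f\<close>
  in the direction \<open>[l, y]\<close>.\<close>

lemma W2_funs_polarize:
  assumes r: "r \<ge> 3" and f: "f \<in> W2_funs r" and pq: "p < dimV r" "q < dimV r"
  shows "(\<lambda>l. f (l + (l * so_unit r p q - so_unit r p q * l)) - f l - f (l * so_unit r p q - so_unit r p q * l)) \<in> W2_funs r"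
proof -
  obtain s where s: "s \<in> W2mod r" "\<forall>l\<in>so r. eval2 s l = f l" using f unfolding W2_funs_def by auto
  have s_carrier: "sym2_carrier r s" using W2mod_vanish_on_wedges[OF s(1) r] by blast
  have y: "so_unit r p q \<in> so r" by (rule so_unit_so[OF pq])
  have "act (so_unit r p q) s \<in> W2mod r" by (rule W2mod.act[OF y s(1)])
  moreover have "\<forall>l\<in>so r. eval2 (act (so_unit r p q) s) l = f (l + (l * so_unit r p q - so_unit r p q * l)) - f l - f (l * so_unit r p q - so_unit r p q * l)"
  proof
    fix l assume l: "l \<in> so r"
    let ?m = "l * so_unit r p q - so_unit r p q * l"
    have m: "?m \<in> so r" by (rule so_commutator[OF l y])
    have "eval2 (act (so_unit r p q) s) l = polar2 s l ?m" by (rule eval2_act_polar[OF s_carrier]) (use l in auto)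
    also have "\<dots> = eval2 s (l + ?m) - eval2 s l - eval2 s ?m"
      using eval2_add_polar[OF s_carrier, of l ?m] l m by simp
    also have "\<dots> = f (l + ?m) - f l - f ?m" using s(2) l m so_add[OF l m] by simp
    finally show "eval2 (act (so_unit r p q) s) l = f (l + ?m) - f l - f ?m" .
  qed
  ultimately show ?thesis unfolding W2_funs_def by blast
qed

definition pfaff_in_W2 :: "nat \<Rightarrow> nat \<Rightarrow> nat \<Rightarrow> nat \<Rightarrow> nat \<Rightarrow> bool" where
  "pfaff_in_W2 r a b c d \<longleftrightarrow> pfaff4 r a b c d \<in> W2_funs r"

lemma pfaff_in_W2_swap12: "pfaff_in_W2 r a b c d \<Longrightarrow> a < dimV r \<Longrightarrow> b < dimV r \<Longrightarrow> c < dimV r \<Longrightarrow> d < dimV r \<Longrightarrow> pfaff_in_W2 r b a c d"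
  unfolding pfaff_in_W2_def
  by (drule W2_funs_smult[where k="-1"], erule W2_funs_cong) (simp add: pfaff4_def skew_coord_antisym[of _ r b a] algebra_simps)

lemma pfaff_in_W2_swap23: "pfaff_in_W2 r a b c d \<Longrightarrow> a < dimV r \<Longrightarrow> b < dimV r \<Longrightarrow> c < dimV r \<Longrightarrow> d < dimV r \<Longrightarrow> pfaff_in_W2 r a c b d"
  unfolding pfaff_in_W2_def
  by (drule W2_funs_smult[where k="-1"], erule W2_funs_cong) (simp add: pfaff4_def skew_coord_antisym[of _ r c b] algebra_simps)

lemma pfaff_in_W2_swap34: "pfaff_in_W2 r a b c d \<Longrightarrow> a < dimV r \<Longrightarrow> b < dimV r \<Longrightarrow> c < dimV r \<Longrightarrow> d < dimV r \<Longrightarrow> pfaff_in_W2 r a b d c"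
  unfolding pfaff_in_W2_def
  by (drule W2_funs_smult[where k="-1"], erule W2_funs_cong) (simp add: pfaff4_def skew_coord_antisym[of _ r d c] algebra_simps)

text \<open>Differentiating along \<open>so_unit r p a\<close> replaces the index \<open>a\<close> by \<open>p\<close>; the conditions
  on \<open>2r - p\<close> kill all other terms.\<close>

lemma pfaff_in_W2_replace:
  assumes r: "r \<ge> 3" and g: "pfaff_in_W2 r a b c d"
    and lt: "a < dimV r" "b < dimV r" "c < dimV r" "d < dimV r" "p < dimV r"
    and na: "a \<noteq> b" "a \<noteq> c" "a \<noteq> d"
    and np: "2*r - p \<noteq> a" "2*r - p \<noteq> b" "2*r - p \<noteq> c" "2*r - p \<noteq> d"
  shows "pfaff_in_W2 r p b c d"
proof -
  have "(\<lambda>l. pfaff4 r a b c d (l + (l * so_unit r p a - so_unit r p a * l)) - pfaff4 r a b c d l - pfaff4 r a b c d (l * so_unit r p a - so_unit r p a * l)) \<in> W2_funs r"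
    using W2_funs_polarize[OF r g[unfolded pfaff_in_W2_def] lt(5) lt(1)] .
  thus ?thesis unfolding pfaff_in_W2_def
  proof (rule W2_funs_cong)
    fix l assume l: "l \<in> so r"
    have lc: "l \<in> carrier_mat (dimV r) (dimV r)" using l by simp
    show "pfaff4 r a b c d (l + (l * so_unit r p a - so_unit r p a * l)) - pfaff4 r a b c d l - pfaff4 r a b c d (l * so_unit r p a - so_unit r p a * l) = pfaff4 r p b c d l"
      unfolding pfaff4_polarization[OF lc lt(5) lt(1) lt(1-4)]
      using na np by (simp add: so_unit_comm_coord_def pfaff4_def algebra_simps)
  qed
qed

lemma pfaff_in_W2_centre:
  assumes r: "r \<ge> 3" and g: "pfaff_in_W2 r r x c d"
    and lt: "x < dimV r" "c < dimV r" "d < dimV r"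
    and nx: "x \<noteq> r" and nc: "c \<noteq> r" "c \<noteq> x" and nd: "d \<noteq> r" "d \<noteq> x"
  shows "pfaff_in_W2 r (2*r - x) x c d"
proof -
  have rl: "r < dimV r" by simp
  have pl: "2*r - x < dimV r" by (simp add: dimV_def)
  have "(\<lambda>l. pfaff4 r r x c d (l + (l * so_unit r (2*r-x) r - so_unit r (2*r-x) r * l)) - pfaff4 r r x c d l - pfaff4 r r x c d (l * so_unit r (2*r-x) r - so_unit r (2*r-x) r * l)) \<in> W2_funs r"
    using W2_funs_polarize[OF r g[unfolded pfaff_in_W2_def] pl rl] .
  thus ?thesis unfolding pfaff_in_W2_def
  proof (rule W2_funs_cong)
    fix l assume l: "l \<in> so r"
    have lc: "l \<in> carrier_mat (dimV r) (dimV r)" using l by simp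
    have e: "2*r - (2*r - x) = x" "2*r - r = r" using lt by (auto simp: dimV_def)
    have ne: "x \<noteq> 2*r - x" using nx lt by (auto simp: dimV_def)
    show "pfaff4 r r x c d (l + (l * so_unit r (2*r-x) r - so_unit r (2*r-x) r * l)) - pfaff4 r r x c d l - pfaff4 r r x c d (l * so_unit r (2*r-x) r - so_unit r (2*r-x) r * l) = pfaff4 r (2*r-x) x c d l"
      unfolding pfaff4_polarization[OF lc pl rl rl lt(1-3)] so_unit_comm_coord_def e
      using nx nc nd ne skew_coord_diag[OF l rl] by (simp add: pfaff4_def algebra_simps)
  qed
qed

lemma pfaff_in_W2_0123:
  assumes r: "r \<ge> 3"
  shows "pfaff_in_W2 r 0 1 2 3"
proof -
  have "eval2 (w2 r) \<in> W2_funs r" unfolding W2_funs_def using W2mod.gen by blast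
  from W2_funs_smult[OF this, of "1/4"] show ?thesis
    unfolding pfaff_in_W2_def by (rule W2_funs_cong) (simp add: eval2_w2_pfaff4[OF r])
qed

lemma sorted_4_wlog_first:
  fixes Q :: "nat \<Rightarrow> nat \<Rightarrow> nat \<Rightarrow> nat \<Rightarrow> bool"
  assumes s12: "\<And>a b c d. Q a b c d \<Longrightarrow> Q b a c d"
    and s23: "\<And>a b c d. Q a b c d \<Longrightarrow> Q a c b d"
    and s34: "\<And>a b c d. Q a b c d \<Longrightarrow> Q a b d c"
    and srt: "\<And>a b c d. a < b \<Longrightarrow> b < c \<Longrightarrow> c < d \<Longrightarrow> Q a b c d"
    and h: "b < c" "c < d" "a \<noteq> b" "a \<noteq> c" "a \<noteq> d"
  shows "Q a b c d"
proof -
  consider "a < b" | "b < a" "a < c" | "c < a" "a < d" | "d < a" using h by (metis linorder_neqE_nat)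
  thus ?thesis
  proof cases
    case 1 thus ?thesis using h srt by blast
  next
    case 2 thus ?thesis using h srt[of b a c d] s12 by blast
  next
    case 3 thus ?thesis using h srt[of b c a d] s12 s23 by blast
  next
    case 4 thus ?thesis using h srt[of b c d a] s12 s23 s34 by blast
  qed
qed

lemma sorted_4_wlog:
  fixes Q :: "nat \<Rightarrow> nat \<Rightarrow> nat \<Rightarrow> nat \<Rightarrow> bool"
  assumes s12: "\<And>a b c d. Q a b c d \<Longrightarrow> Q b a c d"
    and s23: "\<And>a b c d. Q a b c d \<Longrightarrow> Q a c b d"
    and s34: "\<And>a b c d. Q a b c d \<Longrightarrow> Q a b d c"
    and srt: "\<And>a b c d. a < b \<Longrightarrow> b < c \<Longrightarrow> c < d \<Longrightarrow> Q a b c d"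
    and dist: "a \<noteq> b" "a \<noteq> c" "a \<noteq> d" "b \<noteq> c" "b \<noteq> d" "c \<noteq> d"
  shows "Q a b c d"
proof -
  note first = sorted_4_wlog_first[where Q = Q, OF s12 s23 s34 srt]
  have last_sorted: "Q a b c d" if h: "c < d" "b \<noteq> c" "b \<noteq> d" "a \<noteq> b" "a \<noteq> c" "a \<noteq> d" for a b c d
  proof -
    consider "b < c" | "c < b" "b < d" | "d < b" using h by (metis linorder_neqE_nat)
    thus ?thesis
    proof cases
      case 1 thus ?thesis using h first by blast
    next
      case 2 thus ?thesis using h first[of c b d a] s23 by blast
    next
      case 3 thus ?thesis using h first[of c d b a] s23 s34 by blast
    qed
  qed
  show ?thesis
  proof (cases "c < d")
    case True thus ?thesis using last_sorted dist by blast
  next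
    case False hence "d < c" using dist by linarith
    thus ?thesis using last_sorted[of d c b a] dist s34 by blast
  qed
qed

context
  fixes r :: nat
  assumes r3: "r \<ge> 3"
begin

lemma pfaff_in_W2_replace1: "pfaff_in_W2 r a b c d \<Longrightarrow> a < dimV r \<Longrightarrow> b < dimV r \<Longrightarrow> c < dimV r \<Longrightarrow> d < dimV r \<Longrightarrow> p < dimV r \<Longrightarrow>
   a \<noteq> b \<Longrightarrow> a \<noteq> c \<Longrightarrow> a \<noteq> d \<Longrightarrow> 2*r-p \<noteq> a \<Longrightarrow> 2*r-p \<noteq> b \<Longrightarrow> 2*r-p \<noteq> c \<Longrightarrow> 2*r-p \<noteq> d \<Longrightarrow> pfaff_in_W2 r p b c d"
  using pfaff_in_W2_replace[OF r3] by blast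

lemma pfaff_in_W2_replace2: "pfaff_in_W2 r a b c d \<Longrightarrow> a < dimV r \<Longrightarrow> b < dimV r \<Longrightarrow> c < dimV r \<Longrightarrow> d < dimV r \<Longrightarrow> p < dimV r \<Longrightarrow>
   b \<noteq> a \<Longrightarrow> b \<noteq> c \<Longrightarrow> b \<noteq> d \<Longrightarrow> 2*r-p \<noteq> a \<Longrightarrow> 2*r-p \<noteq> b \<Longrightarrow> 2*r-p \<noteq> c \<Longrightarrow> 2*r-p \<noteq> d \<Longrightarrow> pfaff_in_W2 r a p c d"
  by (drule pfaff_in_W2_swap12, simp_all, drule pfaff_in_W2_replace1, simp_all, drule pfaff_in_W2_swap12, simp_all)

lemma pfaff_in_W2_replace3: "pfaff_in_W2 r a b c d \<Longrightarrow> a < dimV r \<Longrightarrow> b < dimV r \<Longrightarrow> c < dimV r \<Longrightarrow> d < dimV r \<Longrightarrow> p < dimV r \<Longrightarrow>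
   c \<noteq> a \<Longrightarrow> c \<noteq> b \<Longrightarrow> c \<noteq> d \<Longrightarrow> 2*r-p \<noteq> a \<Longrightarrow> 2*r-p \<noteq> b \<Longrightarrow> 2*r-p \<noteq> c \<Longrightarrow> 2*r-p \<noteq> d \<Longrightarrow> pfaff_in_W2 r a b p d"
  by (drule pfaff_in_W2_swap23, simp_all, drule pfaff_in_W2_replace2, simp_all, drule pfaff_in_W2_swap23, simp_all)

lemma pfaff_in_W2_replace4: "pfaff_in_W2 r a b c d \<Longrightarrow> a < dimV r \<Longrightarrow> b < dimV r \<Longrightarrow> c < dimV r \<Longrightarrow> d < dimV r \<Longrightarrow> p < dimV r \<Longrightarrow>
   d \<noteq> a \<Longrightarrow> d \<noteq> b \<Longrightarrow> d \<noteq> c \<Longrightarrow> 2*r-p \<noteq> a \<Longrightarrow> 2*r-p \<noteq> b \<Longrightarrow> 2*r-p \<noteq> c \<Longrightarrow> 2*r-p \<noteq> d \<Longrightarrow> pfaff_in_W2 r a b c p"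
  by (drule pfaff_in_W2_swap34, simp_all, drule pfaff_in_W2_replace3, simp_all, drule pfaff_in_W2_swap34, simp_all)

lemma reflect_ne_of_le: "p \<le> r \<Longrightarrow> y \<le> r \<Longrightarrow> y \<noteq> p \<Longrightarrow> 2*r - p \<noteq> y"
  by linarith

lemma less_dimV_of_le: "y \<le> r \<Longrightarrow> y < dimV r"
  unfolding dimV_def by linarith

lemma pfaff_in_W2_low_move4:
  assumes g: "pfaff_in_W2 r a b c d" and le: "a \<le> r" "b \<le> r" "c \<le> r" "d \<le> r" "p \<le> r"
    and dist: "a \<noteq> b" "a \<noteq> c" "a \<noteq> d" "b \<noteq> c" "b \<noteq> d" "c \<noteq> d"
    and np: "p \<noteq> a" "p \<noteq> b" "p \<noteq> c"
  shows "pfaff_in_W2 r a b c p"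
proof (cases "p = d")
  case True thus ?thesis using g by simp
next
  case False
  show ?thesis by (rule pfaff_in_W2_replace4[OF g]) (simp_all add: le less_dimV_of_le reflect_ne_of_le dist dist[symmetric] np np[symmetric] False False[symmetric])
qed

lemma pfaff_in_W2_low_move3:
  assumes g: "pfaff_in_W2 r a b c d" and le: "a \<le> r" "b \<le> r" "c \<le> r" "d \<le> r" "p \<le> r"
    and dist: "a \<noteq> b" "a \<noteq> c" "a \<noteq> d" "b \<noteq> c" "b \<noteq> d" "c \<noteq> d"
    and np: "p \<noteq> a" "p \<noteq> b" "p \<noteq> d"
  shows "pfaff_in_W2 r a b p d"
proof (cases "p = c")
  case True thus ?thesis using g by simp
next
  case False
  show ?thesis by (rule pfaff_in_W2_replace3[OF g]) (simp_all add: le less_dimV_of_le reflect_ne_of_le dist dist[symmetric] np np[symmetric] False False[symmetric])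
qed

lemma pfaff_in_W2_low_move2:
  assumes g: "pfaff_in_W2 r a b c d" and le: "a \<le> r" "b \<le> r" "c \<le> r" "d \<le> r" "p \<le> r"
    and dist: "a \<noteq> b" "a \<noteq> c" "a \<noteq> d" "b \<noteq> c" "b \<noteq> d" "c \<noteq> d"
    and np: "p \<noteq> a" "p \<noteq> c" "p \<noteq> d"
  shows "pfaff_in_W2 r a p c d"
proof (cases "p = b")
  case True thus ?thesis using g by simp
next
  case False
  show ?thesis by (rule pfaff_in_W2_replace2[OF g]) (simp_all add: le less_dimV_of_le reflect_ne_of_le dist dist[symmetric] np np[symmetric] False False[symmetric])
qed

lemma pfaff_in_W2_low_move1:
  assumes g: "pfaff_in_W2 r a b c d" and le: "a \<le> r" "b \<le> r" "c \<le> r" "d \<le> r" "p \<le> r"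
    and dist: "a \<noteq> b" "a \<noteq> c" "a \<noteq> d" "b \<noteq> c" "b \<noteq> d" "c \<noteq> d"
    and np: "p \<noteq> b" "p \<noteq> c" "p \<noteq> d"
  shows "pfaff_in_W2 r p b c d"
proof (cases "p = a")
  case True thus ?thesis using g by simp
next
  case False
  show ?thesis by (rule pfaff_in_W2_replace1[OF g]) (simp_all add: le less_dimV_of_le reflect_ne_of_le dist dist[symmetric] np np[symmetric] False False[symmetric])
qed

lemma pfaff_in_W2_low_sorted:
  assumes "t1 < t2" "t2 < t3" "t3 < t4" "t4 \<le> r"
  shows "pfaff_in_W2 r t1 t2 t3 t4"
proof -
  have g0: "pfaff_in_W2 r 0 1 2 3" by (rule pfaff_in_W2_0123[OF r3])
  have g1: "pfaff_in_W2 r 0 1 2 t4" by (rule pfaff_in_W2_low_move4[OF g0]) (use assms r3 in auto)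
  have g2: "pfaff_in_W2 r 0 1 t3 t4" by (rule pfaff_in_W2_low_move3[OF g1]) (use assms r3 in auto)
  have g3: "pfaff_in_W2 r 0 t2 t3 t4" by (rule pfaff_in_W2_low_move2[OF g2]) (use assms r3 in auto)
  show ?thesis by (rule pfaff_in_W2_low_move1[OF g3]) (use assms r3 in auto)
qed

lemma pfaff_in_W2_low:
  assumes le: "a \<le> r" "b \<le> r" "c \<le> r" "d \<le> r"
    and dist: "a \<noteq> b" "a \<noteq> c" "a \<noteq> d" "b \<noteq> c" "b \<noteq> d" "c \<noteq> d"
  shows "pfaff_in_W2 r a b c d"
proof -
  let ?Q = "\<lambda>a b c d. a \<le> r \<longrightarrow> b \<le> r \<longrightarrow> c \<le> r \<longrightarrow> d \<le> r \<longrightarrow> pfaff_in_W2 r a b c d"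
  have lt: "\<And>x. x \<le> r \<Longrightarrow> x < dimV r" by (simp add: dimV_def)
  have "?Q a b c d"
  proof (rule sorted_4_wlog[where Q="?Q"])
    show "?Q b a c d" if "?Q a b c d" for a b c d using that pfaff_in_W2_swap12 lt by blast
    show "?Q a c b d" if "?Q a b c d" for a b c d using that pfaff_in_W2_swap23 lt by blast
    show "?Q a b d c" if "?Q a b c d" for a b c d using that pfaff_in_W2_swap34 lt by blast
    show "?Q a b c d" if "a < b" "b < c" "c < d" for a b c d using that pfaff_in_W2_low_sorted by blast
  qed (use dist in auto)
  thus ?thesis using le by blast
qed

lemma pfaff_in_W2_reflect1_centre:
  assumes g: "pfaff_in_W2 r x r c d" and lt: "x < dimV r" "c < dimV r" "d < dimV r"
    and dist: "x \<noteq> r" "x \<noteq> c" "x \<noteq> d" "r \<noteq> c" "r \<noteq> d" "c \<noteq> d"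
    and np: "2*r - x \<noteq> c" "2*r - x \<noteq> d"
  shows "pfaff_in_W2 r (2*r - x) r c d"
proof -
  have rl: "r < dimV r" by simp
  have xl: "2*r - x < dimV r" by (simp add: dimV_def)
  have g1: "pfaff_in_W2 r r x c d" by (rule pfaff_in_W2_swap12[OF g lt(1) rl lt(2,3)])
  have g2: "pfaff_in_W2 r (2*r-x) x c d" by (rule pfaff_in_W2_centre[OF r3 g1 lt]) (use dist in auto)
  have ne: "2*r - x \<noteq> r" "2*r - x \<noteq> x" using dist lt by (auto simp: dimV_def)
  have rr: "2*r - r = r" by simp
  show ?thesis by (rule pfaff_in_W2_replace2[OF g2 xl lt(1) lt(2,3) rl]) (simp_all add: rr dist dist[symmetric] np np[symmetric] ne ne[symmetric])
qed

lemma pfaff_in_W2_reflect1: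
  assumes g: "pfaff_in_W2 r x b c d" and lt: "x < dimV r" "b < dimV r" "c < dimV r" "d < dimV r"
    and dist: "x \<noteq> b" "x \<noteq> c" "x \<noteq> d" "b \<noteq> c" "b \<noteq> d" "c \<noteq> d"
    and xr: "x \<noteq> r"
    and np: "2*r - x \<noteq> b" "2*r - x \<noteq> c" "2*r - x \<noteq> d"
  shows "pfaff_in_W2 r (2*r - x) b c d"
proof -
  have rl: "r < dimV r" by simp
  have xl: "2*r - x < dimV r" by (simp add: dimV_def)
  have e: "2*r - (2*r - x) = x" using lt by (simp add: dimV_def)
  consider "r \<noteq> b" "r \<noteq> c" "r \<noteq> d" | "b = r" | "c = r" | "d = r" by blast
  thus ?thesis
  proof cases
    case 1
    have rr: "2*r - r = r" by simp
    have g1: "pfaff_in_W2 r r b c d" by (rule pfaff_in_W2_replace1[OF g lt rl]) (simp_all add: rr dist xr[symmetric] 1)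
    show ?thesis by (rule pfaff_in_W2_replace1[OF g1 rl lt(2-4) xl]) (simp_all add: e dist xr 1 1[symmetric])
  next
    case 2 thus ?thesis using pfaff_in_W2_reflect1_centre g lt dist np by blast
  next
    case 3
    have g1: "pfaff_in_W2 r x r b d" using pfaff_in_W2_swap23[OF g lt] 3 by simp
    have g2: "pfaff_in_W2 r (2*r-x) r b d" by (rule pfaff_in_W2_reflect1_centre[OF g1]) (use lt dist np 3 in auto)
    show ?thesis using pfaff_in_W2_swap23[OF g2 xl rl lt(2) lt(4)] 3 by simp
  next
    case 4
    have g1: "pfaff_in_W2 r x b r c" using pfaff_in_W2_swap34[OF g lt] 4 by simp
    have g1': "pfaff_in_W2 r x r b c" using pfaff_in_W2_swap23[OF g1 lt(1,2) rl lt(3)] by simp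
    have g2: "pfaff_in_W2 r (2*r-x) r b c" by (rule pfaff_in_W2_reflect1_centre[OF g1']) (use lt dist np 4 in auto)
    have g3: "pfaff_in_W2 r (2*r-x) b r c" using pfaff_in_W2_swap23[OF g2 xl rl lt(2,3)] by simp
    show ?thesis using pfaff_in_W2_swap34[OF g3 xl lt(2) rl lt(3)] 4 by simp
  qed
qed

lemma pfaff_in_W2_reflect2:
  assumes g: "pfaff_in_W2 r a x c d" and lt: "a < dimV r" "x < dimV r" "c < dimV r" "d < dimV r"
    and dist: "x \<noteq> a" "x \<noteq> c" "x \<noteq> d" "a \<noteq> c" "a \<noteq> d" "c \<noteq> d"
    and xr: "x \<noteq> r" and np: "2*r - x \<noteq> a" "2*r - x \<noteq> c" "2*r - x \<noteq> d"
  shows "pfaff_in_W2 r a (2*r - x) c d"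
proof -
  have xl: "2*r - x < dimV r" by (simp add: dimV_def)
  have "pfaff_in_W2 r x a c d" by (rule pfaff_in_W2_swap12[OF g lt])
  hence "pfaff_in_W2 r (2*r - x) a c d" by (rule pfaff_in_W2_reflect1) (use lt dist xr np in auto)
  thus ?thesis using pfaff_in_W2_swap12 lt xl by blast
qed

lemma pfaff_in_W2_reflect3:
  assumes g: "pfaff_in_W2 r a b x d" and lt: "a < dimV r" "b < dimV r" "x < dimV r" "d < dimV r"
    and dist: "x \<noteq> a" "x \<noteq> b" "x \<noteq> d" "a \<noteq> b" "a \<noteq> d" "b \<noteq> d"
    and xr: "x \<noteq> r" and np: "2*r - x \<noteq> a" "2*r - x \<noteq> b" "2*r - x \<noteq> d"
  shows "pfaff_in_W2 r a b (2*r - x) d"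
proof -
  have xl: "2*r - x < dimV r" by (simp add: dimV_def)
  have "pfaff_in_W2 r a x b d" by (rule pfaff_in_W2_swap23[OF g lt])
  hence "pfaff_in_W2 r a (2*r - x) b d" by (rule pfaff_in_W2_reflect2) (use lt dist xr np in auto)
  thus ?thesis using pfaff_in_W2_swap23 lt xl by blast
qed

lemma pfaff_in_W2_reflect4:
  assumes g: "pfaff_in_W2 r a b c x" and lt: "a < dimV r" "b < dimV r" "c < dimV r" "x < dimV r"
    and dist: "x \<noteq> a" "x \<noteq> b" "x \<noteq> c" "a \<noteq> b" "a \<noteq> c" "b \<noteq> c"
    and xr: "x \<noteq> r" and np: "2*r - x \<noteq> a" "2*r - x \<noteq> b" "2*r - x \<noteq> c"
  shows "pfaff_in_W2 r a b c (2*r - x)"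
proof -
  have xl: "2*r - x < dimV r" by (simp add: dimV_def)
  have "pfaff_in_W2 r a b x c" by (rule pfaff_in_W2_swap34[OF g lt])
  hence "pfaff_in_W2 r a b (2*r - x) c" by (rule pfaff_in_W2_reflect3) (use lt dist xr np in auto)
  thus ?thesis using pfaff_in_W2_swap34 lt xl by blast
qed

definition low_index :: "nat \<Rightarrow> nat" where "low_index x = (if x \<le> r then x else 2*r - x)"

lemma low_index_props:
  assumes "x < dimV r"
  shows "low_index x \<le> r" "low_index x < dimV r" "x = low_index x \<or> (low_index x \<noteq> r \<and> x = 2*r - low_index x)" "x < dimV r"
  using assms unfolding low_index_def dimV_def by auto

lemma low_index_ne:
  assumes "u < dimV r" "v < dimV r" "u \<noteq> v" "u + v \<noteq> 2*r"
  shows "u \<noteq> low_index v" "low_index u \<noteq> low_index v"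
  using assms unfolding low_index_def dimV_def by auto

lemma low_index_reflect_cases:
  assumes "x < dimV r" and "P (low_index x)"
    and "low_index x \<noteq> r \<Longrightarrow> 2*r - low_index x = x \<Longrightarrow> P (2*r - low_index x)"
  shows "P x"
  using assms unfolding low_index_def dimV_def by (cases "x \<le> r") auto

lemma pfaff_in_W2_no_pair:
  assumes lt: "a < dimV r" "b < dimV r" "c < dimV r" "d < dimV r"
    and dist: "a \<noteq> b" "a \<noteq> c" "a \<noteq> d" "b \<noteq> c" "b \<noteq> d" "c \<noteq> d"
    and np: "a + b \<noteq> 2*r" "a + c \<noteq> 2*r" "a + d \<noteq> 2*r" "b + c \<noteq> 2*r" "b + d \<noteq> 2*r" "c + d \<noteq> 2*r"
  shows "pfaff_in_W2 r a b c d"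
proof -
  have np': "b + a \<noteq> 2*r" "c + a \<noteq> 2*r" "d + a \<noteq> 2*r" "c + b \<noteq> 2*r" "d + b \<noteq> 2*r" "d + c \<noteq> 2*r"
    using np by auto
  note la = low_index_props[OF lt(1)] and lb = low_index_props[OF lt(2)] and lc = low_index_props[OF lt(3)] and ld = low_index_props[OF lt(4)]
  note ne = low_index_ne[OF lt(1) lt(2) dist(1) np(1)] low_index_ne[OF lt(1) lt(3) dist(2) np(2)] low_index_ne[OF lt(1) lt(4) dist(3) np(3)]
    low_index_ne[OF lt(2) lt(3) dist(4) np(4)] low_index_ne[OF lt(2) lt(4) dist(5) np(5)] low_index_ne[OF lt(3) lt(4) dist(6) np(6)]
    low_index_ne[OF lt(2) lt(1) dist(1)[symmetric] np'(1)] low_index_ne[OF lt(3) lt(1) dist(2)[symmetric] np'(2)]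
    low_index_ne[OF lt(4) lt(1) dist(3)[symmetric] np'(3)] low_index_ne[OF lt(3) lt(2) dist(4)[symmetric] np'(4)]
    low_index_ne[OF lt(4) lt(2) dist(5)[symmetric] np'(5)] low_index_ne[OF lt(4) lt(3) dist(6)[symmetric] np'(6)]
  note facts = la lb lc ld ne ne[symmetric] dist dist[symmetric] lt
  have g0: "pfaff_in_W2 r (low_index a) (low_index b) (low_index c) (low_index d)"
    by (rule pfaff_in_W2_low) (simp_all add: la lb lc ld ne)
  have g1: "pfaff_in_W2 r a (low_index b) (low_index c) (low_index d)"
    by (rule low_index_reflect_cases[where P = "\<lambda>x. pfaff_in_W2 r x (low_index b) (low_index c) (low_index d)", OF lt(1) g0],
        rule pfaff_in_W2_reflect1[OF g0]) (simp_all add: facts)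
  have g2: "pfaff_in_W2 r a b (low_index c) (low_index d)"
    by (rule low_index_reflect_cases[where P = "\<lambda>x. pfaff_in_W2 r a x (low_index c) (low_index d)", OF lt(2) g1],
        rule pfaff_in_W2_reflect2[OF g1]) (simp_all add: facts)
  have g3: "pfaff_in_W2 r a b c (low_index d)"
    by (rule low_index_reflect_cases[where P = "\<lambda>x. pfaff_in_W2 r a b x (low_index d)", OF lt(3) g2],
        rule pfaff_in_W2_reflect3[OF g2]) (simp_all add: facts)
  show ?thesis
    by (rule low_index_reflect_cases[where P = "\<lambda>x. pfaff_in_W2 r a b c x", OF lt(4) g3],
        rule pfaff_in_W2_reflect4[OF g3]) (simp_all add: facts)
qed

lemma pfaff_in_W2_one_pair_off_centre:
  assumes lt: "a < dimV r" "b < dimV r" "c < dimV r" "d < dimV r"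
    and dist: "a \<noteq> b" "a \<noteq> c" "a \<noteq> d" "b \<noteq> c" "b \<noteq> d" "c \<noteq> d"
    and ab: "a + b = 2*r" and cd: "c + d \<noteq> 2*r" and cr: "c \<noteq> r" and dr: "d \<noteq> r"
  shows "pfaff_in_W2 r a b c d"
proof -
  have rl: "r < dimV r" by simp
  have br: "b \<noteq> r" and ea: "a = 2*r - b" using ab dist by auto
  have f123: "r \<noteq> b" "r \<noteq> c" "r \<noteq> d" using br cr dr by auto
  have f456: "r + b \<noteq> 2*r" "r + c \<noteq> 2*r" "r + d \<noteq> 2*r" using br cr dr by auto
  have f7: "b + c \<noteq> 2*r" using ab dist(2) by linarith
  have f8: "b + d \<noteq> 2*r" using ab dist(3) by linarith
  note f = f123 f456 f7 f8
  have "pfaff_in_W2 r r b c d"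
    by (rule pfaff_in_W2_no_pair[OF rl lt(2-4) f(1-3) dist(4-6) f(4-6) f(7-8) cd])
  hence "pfaff_in_W2 r (2*r - b) b c d" by (rule pfaff_in_W2_centre[OF r3 _ lt(2-4)]) (use dist cr dr br in auto)
  thus ?thesis using ea by simp
qed

lemma exists_fresh_index: "\<exists>w<3. w \<noteq> a \<and> w \<noteq> 2*r - a \<and> w \<noteq> d \<and> w \<noteq> 2*r - d"
proof (rule ccontr)
  assume "\<not> ?thesis"
  hence h: "\<And>w. w < 3 \<Longrightarrow> w = a \<or> w = 2*r - a \<or> w = d \<or> w = 2*r - d" by blast
  from h[of 0] h[of 1] h[of 2] r3 show False by linarith
qed

lemma pfaff_in_W2_one_pair:
  assumes lt: "a < dimV r" "b < dimV r" "c < dimV r" "d < dimV r"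
    and dist: "a \<noteq> b" "a \<noteq> c" "a \<noteq> d" "b \<noteq> c" "b \<noteq> d" "c \<noteq> d"
    and ab: "a + b = 2*r" and cd: "c + d \<noteq> 2*r"
  shows "pfaff_in_W2 r a b c d"
proof -
  have rl: "r < dimV r" by simp
  have cr: "pfaff_in_W2 r a b r d" if lt': "d < dimV r" and dist': "a \<noteq> d" "b \<noteq> d" "d \<noteq> r" "a \<noteq> r" "b \<noteq> r" for d
  proof -
    obtain w where w: "w < 3" "w \<noteq> a" "w \<noteq> 2*r - a" "w \<noteq> d" "w \<noteq> 2*r - d" using exists_fresh_index by blast
    have wr: "w \<noteq> r" using w r3 by simp
    have wl: "w < dimV r" using w r3 by (simp add: dimV_def)
    have wb: "w \<noteq> b" using w ab by auto
    have wd: "w + d \<noteq> 2*r" using w by auto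
    have g: "pfaff_in_W2 r a b w d" by (rule pfaff_in_W2_one_pair_off_centre[OF lt(1,2) wl lt']) (use dist' w wr wb wd ab in auto)
    have rr: "2*r - r = r" by simp
    show ?thesis by (rule pfaff_in_W2_replace3[OF g lt(1,2) wl lt' rl]) (simp_all add: rr w wb dist' dist'[symmetric] wr[symmetric] dist(1))
  qed
  have ar: "a \<noteq> r" "b \<noteq> r" using ab dist by auto
  consider "c \<noteq> r" "d \<noteq> r" | "c = r" | "d = r" by blast
  thus ?thesis
  proof cases
    case 1 thus ?thesis using pfaff_in_W2_one_pair_off_centre[OF lt dist ab cd] by blast
  next
    case 2 thus ?thesis using cr[OF lt(4)] dist ar by auto
  next
    case 3
    have "pfaff_in_W2 r a b r c" using cr[OF lt(3)] dist ar 3 by auto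
    thus ?thesis using pfaff_in_W2_swap34[of r a b r c] lt 3 by auto
  qed
qed

lemma pfaff_in_W2_two_pairs:
  assumes lt: "a < dimV r" "b < dimV r" "c < dimV r" "d < dimV r"
    and dist: "a \<noteq> b" "a \<noteq> c" "a \<noteq> d" "b \<noteq> c" "b \<noteq> d" "c \<noteq> d"
    and ab: "a + b = 2*r" and cd: "c + d = 2*r"
  shows "pfaff_in_W2 r a b c d"
proof -
  have rl: "r < dimV r" by simp
  have ar: "a \<noteq> r" "b \<noteq> r" "c \<noteq> r" "d \<noteq> r" using ab cd dist by auto
  have ea: "a = 2*r - b" using ab by simp
  have rb: "r + b \<noteq> 2*r" using ar by linarith
  have g0: "pfaff_in_W2 r c d r b" by (rule pfaff_in_W2_one_pair[OF lt(3,4) rl lt(2)]) (simp_all add: dist dist[symmetric] ar ar[symmetric] cd rb)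
  have g1: "pfaff_in_W2 r c r d b" by (rule pfaff_in_W2_swap23[OF g0 lt(3,4) rl lt(2)])
  have g2: "pfaff_in_W2 r r c d b" by (rule pfaff_in_W2_swap12[OF g1 lt(3) rl lt(4) lt(2)])
  have g3: "pfaff_in_W2 r r c b d" by (rule pfaff_in_W2_swap34[OF g2 rl lt(3,4) lt(2)])
  have g4: "pfaff_in_W2 r r b c d" by (rule pfaff_in_W2_swap23[OF g3 rl lt(3) lt(2) lt(4)])
  have "pfaff_in_W2 r (2*r - b) b c d" by (rule pfaff_in_W2_centre[OF r3 g4 lt(2-4)]) (use dist ar in auto)
  thus ?thesis using ea by simp
qed

lemma pfaff_in_W2_pair12:
  assumes lt: "a < dimV r" "b < dimV r" "c < dimV r" "d < dimV r"
    and dist: "a \<noteq> b" "a \<noteq> c" "a \<noteq> d" "b \<noteq> c" "b \<noteq> d" "c \<noteq> d"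
    and ab: "a + b = 2*r"
  shows "pfaff_in_W2 r a b c d"
  using pfaff_in_W2_one_pair[OF lt dist ab] pfaff_in_W2_two_pairs[OF lt dist ab] by blast

lemma pfaff_in_W2_all:
  assumes lt: "a < dimV r" "b < dimV r" "c < dimV r" "d < dimV r"
    and dist: "a \<noteq> b" "a \<noteq> c" "a \<noteq> d" "b \<noteq> c" "b \<noteq> d" "c \<noteq> d"
  shows "pfaff_in_W2 r a b c d"
proof -
  consider "a + b = 2*r" | "a + c = 2*r" | "a + d = 2*r" | "b + c = 2*r" | "b + d = 2*r" | "c + d = 2*r"
    | "a + b \<noteq> 2*r" "a + c \<noteq> 2*r" "a + d \<noteq> 2*r" "b + c \<noteq> 2*r" "b + d \<noteq> 2*r" "c + d \<noteq> 2*r" by blast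
  thus ?thesis
  proof cases
    case 1 thus ?thesis using pfaff_in_W2_pair12[OF lt dist] by blast
  next
    case 2
    have "pfaff_in_W2 r a c b d" by (rule pfaff_in_W2_pair12[OF lt(1,3,2,4)]) (use dist 2 in auto)
    thus ?thesis using pfaff_in_W2_swap23[OF _ lt(1,3,2,4)] by blast
  next
    case 3
    have "pfaff_in_W2 r a d b c" by (rule pfaff_in_W2_pair12[OF lt(1,4,2,3)]) (use dist 3 in auto)
    hence "pfaff_in_W2 r a b d c" using pfaff_in_W2_swap23[OF _ lt(1,4,2,3)] by blast
    thus ?thesis using pfaff_in_W2_swap34[OF _ lt(1,2,4,3)] by blast
  next
    case 4
    have "pfaff_in_W2 r b c a d" by (rule pfaff_in_W2_pair12[OF lt(2,3,1,4)]) (use dist 4 in auto)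
    hence "pfaff_in_W2 r b a c d" using pfaff_in_W2_swap23[OF _ lt(2,3,1,4)] by blast
    thus ?thesis using pfaff_in_W2_swap12[OF _ lt(2,1,3,4)] by blast
  next
    case 5
    have "pfaff_in_W2 r b d a c" by (rule pfaff_in_W2_pair12[OF lt(2,4,1,3)]) (use dist 5 in auto)
    hence "pfaff_in_W2 r b a d c" using pfaff_in_W2_swap23[OF _ lt(2,4,1,3)] by blast
    hence "pfaff_in_W2 r a b d c" using pfaff_in_W2_swap12[OF _ lt(2,1,4,3)] by blast
    thus ?thesis using pfaff_in_W2_swap34[OF _ lt(1,2,4,3)] by blast
  next
    case 6
    have "pfaff_in_W2 r c d a b" by (rule pfaff_in_W2_pair12[OF lt(3,4,1,2)]) (use dist 6 in auto)
    hence "pfaff_in_W2 r c a d b" using pfaff_in_W2_swap23[OF _ lt(3,4,1,2)] by blast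
    hence "pfaff_in_W2 r a c d b" using pfaff_in_W2_swap12[OF _ lt(3,1,4,2)] by blast
    hence "pfaff_in_W2 r a c b d" using pfaff_in_W2_swap34[OF _ lt(1,3,4,2)] by blast
    thus ?thesis using pfaff_in_W2_swap23[OF _ lt(1,3,2,4)] by blast
  next
    case 7 thus ?thesis using pfaff_in_W2_no_pair[OF lt dist] by blast
  qed
qed

end

section \<open>The zero locus of W_2\<close>

lemma VW2_pfaff4_zero:
  assumes r3: "r \<ge> 3" and l: "l \<in> VW2 r" and lt: "a < dimV r" "b < dimV r" "c < dimV r" "d < dimV r"
  shows "pfaff4 r a b c d l = 0"
proof -
  have ls: "l \<in> so r" using l by (simp add: VW2_def)
  show ?thesis
  proof (cases "a \<noteq> b \<and> a \<noteq> c \<and> a \<noteq> d \<and> b \<noteq> c \<and> b \<noteq> d \<and> c \<noteq> d")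
    case True
    hence "pfaff_in_W2 r a b c d" using pfaff_in_W2_all[OF r3 lt] by blast
    then obtain s where s: "s \<in> W2mod r" "\<forall>l\<in>so r. eval2 s l = pfaff4 r a b c d l"
      unfolding pfaff_in_W2_def W2_funs_def by auto
    have "eval2 s l = 0" using l s(1) by (simp add: VW2_def)
    thus ?thesis using s(2) ls by simp
  next
    case False thus ?thesis using pfaff4_repeated_index[OF ls lt] by blast
  qed
qed

text \<open>If some entry \<open>A\<^sub>a\<^sub>b\<close> of \<open>A = J l\<close> is nonzero, the Pluecker relations give
  \<open>l = (A\<^sub>a \<and> A\<^sub>b) / A\<^sub>a\<^sub>b\<close> for the rows \<open>A\<^sub>a, A\<^sub>b\<close>.\<close>

lemma pfaff4_zero_imp_wedge:
  assumes l: "l \<in> so r" and z: "\<And>a b c d. a < dimV r \<Longrightarrow> b < dimV r \<Longrightarrow> c < dimV r \<Longrightarrow> d < dimV r \<Longrightarrow> pfaff4 r a b c d l = 0"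
  shows "\<exists>u w. l = wedge r u w"
proof (cases "\<forall>i<dimV r. \<forall>j<dimV r. skew_coord r l i j = 0")
  case True
  have lc: "l \<in> carrier_mat (dimV r) (dimV r)" using l by simp
  have "l = wedge r (\<lambda>_. 0) (\<lambda>_. 0)"
  proof (rule eq_matI)
    fix i j assume "i < dim_row (wedge r (\<lambda>_. 0) (\<lambda>_. 0))" "j < dim_col (wedge r (\<lambda>_. 0) (\<lambda>_. 0))"
    hence ij: "i < dimV r" "j < dimV r" by auto
    have "2*r - i < dimV r" by (simp add: dimV_def)
    hence "skew_coord r l (2*r - i) j = 0" using True ij by blast
    moreover have "2*r - (2*r - i) = i" using ij by (simp add: dimV_def)
    ultimately show "l $$ (i,j) = wedge r (\<lambda>_. 0) (\<lambda>_. 0) $$ (i,j)" using ij by (simp add: skew_coord_def)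
  qed (use lc in auto)
  thus ?thesis by blast
next
  case False
  then obtain a b where ab: "a < dimV r" "b < dimV r" "skew_coord r l a b \<noteq> 0" by blast
  have lc: "l \<in> carrier_mat (dimV r) (dimV r)" using l by simp
  define u where "u = (\<lambda>i. skew_coord r l a (2*r - i) / skew_coord r l a b)"
  define w where "w = (\<lambda>i. skew_coord r l b (2*r - i))"
  have "l = wedge r u w"
  proof (rule eq_matI)
    fix i j assume "i < dim_row (wedge r u w)" "j < dim_col (wedge r u w)"
    hence ij: "i < dimV r" "j < dimV r" by auto
    have i': "2*r - i < dimV r" by (simp add: dimV_def)
    have e: "2*r - (2*r - j) = j" "2*r - (2*r - i) = i" "r*2 - (r*2 - j) = j" "r*2 - (r*2 - i) = i" using ij by (auto simp: dimV_def)
    have p: "pfaff4 r a b (2*r - i) j l = 0" by (rule z[OF ab(1,2) i' ij(2)])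
    have "l $$ (i,j) = skew_coord r l (2*r - i) j" by (simp add: skew_coord_def e)
    also have "\<dots> = (skew_coord r l a (2*r - i) * skew_coord r l b j - skew_coord r l a j * skew_coord r l b (2*r - i)) / skew_coord r l a b"
      using p ab(3) by (simp add: pfaff4_def field_simps)
    also have "\<dots> = wedge r u w $$ (i,j)" using ij ab(3) by (simp add: u_def w_def e field_simps)
    finally show "l $$ (i,j) = wedge r u w $$ (i,j)" .
  qed (use lc in auto)
  thus ?thesis by blast
qed

definition hdiag :: "nat \<Rightarrow> (nat \<Rightarrow> complex) \<Rightarrow> nat \<Rightarrow> complex" where
  "hdiag r c p = (if p < r then c (p + 1) else if p = r then 0 else - c (2 * r + 1 - p))"

lemma hvec_carrier[simp]: "hvec r c \<in> carrier_mat (dimV r) (dimV r)"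
  by (simp add: hvec_def)

lemma hvec_dim[simp]: "dim_row (hvec r c) = dimV r" "dim_col (hvec r c) = dimV r"
  by (simp_all add: hvec_def)

lemma hvec_index: "p < dimV r \<Longrightarrow> q < dimV r \<Longrightarrow> hvec r c $$ (p,q) = (if p = q then hdiag r c p else 0)"
  by (simp add: hvec_def hdiag_def)

lemma hdiag_cong:
  assumes h: "\<And>j. j \<in> {1..r} \<Longrightarrow> c j = d j" and p: "p < dimV r"
  shows "hdiag r c p = hdiag r d p"
proof -
  consider "p < r" | "p = r" | "r < p" by linarith
  thus ?thesis
  proof cases
    case 1 thus ?thesis using h[of "p+1"] by (simp add: hdiag_def)
  next
    case 2 thus ?thesis by (simp add: hdiag_def)
  next
    case 3
    have "2*r + 1 - p \<in> {1..r}" using 3 p unfolding dimV_def by auto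
    thus ?thesis using h 3 by (simp add: hdiag_def)
  qed
qed

lemma hvec_cong:
  assumes h: "\<And>j. j \<in> {1..r} \<Longrightarrow> c j = d j"
  shows "hvec r c = hvec r d"
proof (rule eq_matI)
  fix i j assume "i < dim_row (hvec r d)" "j < dim_col (hvec r d)"
  hence ij: "i < dimV r" "j < dimV r" by auto
  show "hvec r c $$ (i, j) = hvec r d $$ (i, j)"
  proof -
    have "hdiag r c i = hdiag r d i" by (rule hdiag_cong) (use h ij in auto)
    thus ?thesis using ij by (cases "i = j") (simp_all add: hvec_index)
  qed
qed auto

lemma hvec_smult: "hvec r (\<lambda>j. k * e j) = k \<cdot>\<^sub>m hvec r e"
  unfolding hvec_def by (rule eq_matI) auto

lemma hvec_pfaff4_zero_imp_products_zero:
  assumes z: "\<And>a b c d. a < dimV r \<Longrightarrow> b < dimV r \<Longrightarrow> c < dimV r \<Longrightarrow> d < dimV r \<Longrightarrow> pfaff4 r a b c d (hvec r c') = 0"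
    and ij: "i \<in> {1..r}" "j \<in> {1..r}" "i \<noteq> j"
  shows "c' i * c' j = 0"
proof -
  let ?a = "i - 1" and ?b = "j - 1"
  have lt: "?a < dimV r" "?b < dimV r" "2*r - ?a < dimV r" "2*r - ?b < dimV r" using ij by (auto simp: dimV_def)
  have "pfaff4 r ?a ?b (2*r - ?a) (2*r - ?b) (hvec r c') = 0" by (rule z[OF lt])
  moreover have "skew_coord r (hvec r c') ?a ?b = 0" "skew_coord r (hvec r c') ?a (2*r - ?b) = 0"
    using ij lt by (auto simp: skew_coord_def hvec_index)
  moreover have "skew_coord r (hvec r c') ?a (2*r - ?a) = - c' i" "skew_coord r (hvec r c') ?b (2*r - ?b) = - c' j"
    using ij lt by (auto simp: skew_coord_def hvec_index hdiag_def)
  ultimately show ?thesis by (simp add: pfaff4_def)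
qed

lemma hvec_pfaff4_zero_imp_eps_line:
  assumes z: "\<And>a b c d. a < dimV r \<Longrightarrow> b < dimV r \<Longrightarrow> c < dimV r \<Longrightarrow> d < dimV r \<Longrightarrow> pfaff4 r a b c d (hvec r c') = 0"
    and r1: "r \<ge> 1"
  shows "hvec r c' \<in> (\<Union>i \<in> {1..r}. cline (hvec r (eps i)))"
proof (cases "\<forall>i\<in>{1..r}. c' i = 0")
  case True
  have "hvec r c' = hvec r (\<lambda>j. 0 * eps 1 j)" by (rule hvec_cong) (use True in auto)
  also have "\<dots> = 0 \<cdot>\<^sub>m hvec r (eps 1)" by (rule hvec_smult)
  finally show ?thesis using r1 unfolding cline_def by auto
next
  case False
  then obtain i where i: "i \<in> {1..r}" "c' i \<noteq> 0" by blast
  have "hvec r c' = hvec r (\<lambda>j. c' i * eps i j)"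
  proof (rule hvec_cong)
    fix j assume j: "j \<in> {1..r}"
    show "c' j = c' i * eps i j"
      using hvec_pfaff4_zero_imp_products_zero[OF z i(1) j] i(2) by (cases "j = i") (auto simp: eps_def)
  qed
  also have "\<dots> = c' i \<cdot>\<^sub>m hvec r (eps i)" by (rule hvec_smult)
  finally show ?thesis using i unfolding cline_def by auto
qed

lemma smult_hvec_eps_wedge:
  assumes i: "i \<in> {1..r}"
  shows "k \<cdot>\<^sub>m hvec r (eps i) = wedge r (\<lambda>m. k * of_bool (m = i - 1)) (unit_vec (2*r + 1 - i))"
proof -
  define a where "a = i - 1"
  define b where "b = 2*r + 1 - i"
  have ab: "a < r" "r < b" "b < dimV r" "a \<noteq> b" using i unfolding a_def b_def dimV_def by auto
  have e1: "\<And>q. q < dimV r \<Longrightarrow> (2*r - q = b) = (q = a)" "\<And>q. q < dimV r \<Longrightarrow> (2*r - q = a) = (q = b)"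
    using i unfolding a_def b_def dimV_def by auto
  have h: "\<And>p. p < dimV r \<Longrightarrow> hdiag r (eps i) p = of_bool (p = a) - of_bool (p = b)"
  proof -
    fix p assume p: "p < dimV r"
    consider "p < r" | "p = r" | "r < p" by linarith
    thus "hdiag r (eps i) p = of_bool (p = a) - of_bool (p = b)"
    proof cases
      case 1 thus ?thesis using ab i unfolding a_def hdiag_def eps_def by auto
    next
      case 2 thus ?thesis using ab unfolding hdiag_def by auto
    next
      case 3
      have "(2 * r + 1 - p = i) = (p = b)" using 3 p i unfolding b_def dimV_def by auto
      thus ?thesis using 3 ab unfolding hdiag_def eps_def by auto
    qed
  qed
  show ?thesis unfolding a_def[symmetric] b_def[symmetric]
  proof (rule eq_matI)
    fix p q assume "p < dim_row (wedge r (\<lambda>m. k * of_bool (m = a)) (unit_vec b))"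
      "q < dim_col (wedge r (\<lambda>m. k * of_bool (m = a)) (unit_vec b))"
    hence pq: "p < dimV r" "q < dimV r" by auto
    show "(k \<cdot>\<^sub>m hvec r (eps i)) $$ (p, q) = wedge r (\<lambda>m. k * of_bool (m = a)) (unit_vec b) $$ (p, q)"
      using pq ab by (cases "p = q") (auto simp: hvec_index h e1)
  qed auto
qed

lemma smult_hvec_eps1_wedge: "r \<ge> 1 \<Longrightarrow> k \<cdot>\<^sub>m hvec r (eps 1) = wedge r (\<lambda>m. k * of_bool (m = 0)) (unit_vec (2*r))"
  using smult_hvec_eps_wedge[of 1 r k] by simp

lemma smult_hvec_eps_wedge_unit:
  assumes i: "i \<in> {1..r}"
  shows "k \<cdot>\<^sub>m hvec r (eps i) = k \<cdot>\<^sub>m wedge r (unit_vec (i - 1)) (unit_vec (2*r + 1 - i))"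
proof -
  have "hvec r (eps i) = wedge r (unit_vec (i - 1)) (unit_vec (2*r + 1 - i))"
    using smult_hvec_eps_wedge[OF i, of 1] hvec_smult[of r 1 "eps i"] by simp
  thus ?thesis by simp
qed

lemma hvec_fw1_eq_eps1: "r \<ge> 3 \<Longrightarrow> hvec r (fw r 1) = hvec r (eps 1)"
  by (rule hvec_cong) (auto simp: fw_def eps_def)

lemma hvec_VW2_iff:
  assumes r3: "r \<ge> 3"
  shows "hvec r c \<in> VW2 r \<longleftrightarrow> hvec r c \<in> (\<Union>i \<in> {1..r}. cline (hvec r (eps i)))"
proof
  assume "hvec r c \<in> VW2 r"
  then show "hvec r c \<in> (\<Union>i \<in> {1..r}. cline (hvec r (eps i)))"
    by (intro hvec_pfaff4_zero_imp_eps_line VW2_pfaff4_zero[OF r3]) (use r3 in simp_all)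
next
  assume "hvec r c \<in> (\<Union>i \<in> {1..r}. cline (hvec r (eps i)))"
  then obtain i k where i: "i \<in> {1..r}" and c: "hvec r c = k \<cdot>\<^sub>m hvec r (eps i)"
    unfolding cline_def by blast
  show "hvec r c \<in> VW2 r" unfolding c smult_hvec_eps_wedge[OF i] by (rule wedge_VW2[OF r3])
qed

section \<open>Isometries and the orbit of the line through epsilon_1\<close>

definition isometry :: "nat \<Rightarrow> complex mat \<Rightarrow> bool" where
  "isometry r g \<longleftrightarrow> g \<in> carrier_mat (dimV r) (dimV r) \<and>
     (\<forall>i<dimV r. \<forall>j<dimV r. bform r (\<lambda>k. g $$ (k,i)) (\<lambda>k. g $$ (k,j)) = of_bool (i + j = 2*r))"

lemma isometry_bform:
  assumes g: "isometry r g"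
  shows "bform r (mvec r g x) (mvec r g y) = bform r x y"
proof -
  let ?n = "dimV r"
  have gi: "\<And>k l. k < ?n \<Longrightarrow> l < ?n \<Longrightarrow> (\<Sum>i<?n. g $$ (i,k) * g $$ (2*r - i, l)) = of_bool (k + l = 2*r)"
    using g unfolding isometry_def bform_def by blast
  have "bform r (mvec r g x) (mvec r g y) = (\<Sum>i<?n. \<Sum>k<?n. \<Sum>l<?n. x k * y l * (g $$ (i,k) * g $$ (2*r - i, l)))"
    unfolding bform_def mvec_def by (simp add: sum_product algebra_simps)
  also have "\<dots> = (\<Sum>k<?n. \<Sum>i<?n. \<Sum>l<?n. x k * y l * (g $$ (i,k) * g $$ (2*r - i, l)))"
    by (rule sum.swap)
  also have "\<dots> = (\<Sum>k<?n. \<Sum>l<?n. \<Sum>i<?n. x k * y l * (g $$ (i,k) * g $$ (2*r - i, l)))"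
    by (rule sum.cong[OF refl], rule sum.swap)
  also have "\<dots> = (\<Sum>k<?n. \<Sum>l<?n. x k * y l * of_bool (k + l = 2*r))"
    by (intro sum.cong refl) (simp add: sum_distrib_left[symmetric] gi)
  also have "\<dots> = (\<Sum>k<?n. x k * y (2*r - k))"
  proof (intro sum.cong refl)
    fix k assume k: "k \<in> {..<?n}"
    have "(\<Sum>l<?n. x k * y l * of_bool (k + l = 2*r)) = (\<Sum>l<?n. if l = 2*r - k then x k * y l else 0)"
      using k by (intro sum.cong) (auto simp: dimV_def)
    also have "\<dots> = x k * y (2*r - k)" by (simp add: sum.delta dimV_def)
    finally show "(\<Sum>l<?n. x k * y l * of_bool (k + l = 2*r)) = x k * y (2*r - k)" .
  qed
  finally show ?thesis unfolding bform_def .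
qed

lemma isometryI:
  assumes gc: "g \<in> carrier_mat (dimV r) (dimV r)" and p: "\<And>x y. bform r (mvec r g x) (mvec r g y) = bform r x y"
  shows "isometry r g"
  unfolding isometry_def
proof (intro conjI allI impI gc)
  fix i j assume ij: "i < dimV r" "j < dimV r"
  have "bform r (\<lambda>k. g $$ (k,i)) (\<lambda>k. g $$ (k,j)) = bform r (mvec r g (unit_vec i)) (mvec r g (unit_vec j))"
    using ij by (intro bform_cong) (simp_all add: mvec_unit)
  also have "\<dots> = bform r (unit_vec i) (unit_vec j)" by (rule p)
  also have "\<dots> = of_bool (i + j = 2*r)" using ij by (auto simp: bform_unit dimV_def)
  finally show "bform r (\<lambda>k. g $$ (k,i)) (\<lambda>k. g $$ (k,j)) = of_bool (i + j = 2*r)" .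
qed

lemma isometry_mult:
  assumes g: "isometry r g" and h: "isometry r h"
  shows "isometry r (g * h)"
proof (rule isometryI)
  have gc: "g \<in> carrier_mat (dimV r) (dimV r)" and hc: "h \<in> carrier_mat (dimV r) (dimV r)"
    using g h by (auto simp: isometry_def)
  show "g * h \<in> carrier_mat (dimV r) (dimV r)" using gc hc by simp
  fix x y
  have "bform r (mvec r (g * h) x) (mvec r (g * h) y) = bform r (mvec r g (mvec r h x)) (mvec r g (mvec r h y))"
    by (intro bform_cong) (simp_all add: mvec_mult[OF gc hc])
  also have "\<dots> = bform r x y" using isometry_bform[OF g] isometry_bform[OF h] by simp
  finally show "bform r (mvec r (g * h) x) (mvec r (g * h) y) = bform r x y" .
qed

definition reflection :: "nat \<Rightarrow> (nat \<Rightarrow> complex) \<Rightarrow> complex mat" where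
  "reflection r v = mat (dimV r) (dimV r) (\<lambda>(i,j). of_bool (i = j) - 2 / bform r v v * v i * v (2*r - j))"

lemma mvec_reflection: "i < dimV r \<Longrightarrow> mvec r (reflection r v) x i = x i - 2 / bform r v v * bform r x v * v i"
proof -
  assume i: "i < dimV r"
  have "mvec r (reflection r v) x i = (\<Sum>k<dimV r. (if k = i then x k else 0) - (2 / bform r v v * v i) * (x k * v (2*r - k)))"
    unfolding mvec_def reflection_def using i by (intro sum.cong refl) (auto simp: algebra_simps)
  also have "\<dots> = x i - (2 / bform r v v * v i) * bform r x v"
  proof -
    define C where "C = 2 / bform r v v * v i"
    have "(\<Sum>k<dimV r. (if k = i then x k else 0) - C * (x k * v (2*r - k)))
       = (\<Sum>k<dimV r. if k = i then x k else 0) - C * (\<Sum>k<dimV r. x k * v (2*r - k))"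
      by (simp only: sum_subtractf sum_distrib_left)
    also have "\<dots> = x i - C * bform r x v" using i by (simp add: sum.delta bform_def)
    finally show ?thesis unfolding C_def .
  qed
  finally show ?thesis by (simp add: algebra_simps)
qed

lemma reflection_identity: "D \<noteq> 0 \<Longrightarrow> X - (2/D*Y)*Z - (2/D*Z)*(Y - (2/D*Y)*D) = (X::complex)"
  by (simp add: field_simps)

lemma isometry_reflection:
  assumes v: "bform r v v \<noteq> 0"
  shows "isometry r (reflection r v)"
proof (rule isometryI)
  show "reflection r v \<in> carrier_mat (dimV r) (dimV r)" by (simp add: reflection_def)
  fix x y
  let ?a = "2 / bform r v v"
  have "bform r (mvec r (reflection r v) x) (mvec r (reflection r v) y) = bform r (\<lambda>i. x i - (?a * bform r x v) * v i) (\<lambda>i. y i - (?a * bform r y v) * v i)"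
    by (intro bform_cong) (simp_all add: mvec_reflection)
  also have "\<dots> = bform r x y - (?a * bform r y v) * bform r x v - (?a * bform r x v) * (bform r v y - (?a * bform r y v) * bform r v v)"
    by (simp only: bform_diff_smult_left bform_diff_smult_right)
  also have "\<dots> = bform r x y" unfolding bform_sym[of r v y] by (rule reflection_identity[OF v])
  finally show "bform r (mvec r (reflection r v) x) (mvec r (reflection r v) y) = bform r x y" .
qed

lemma mvec_mult_chain:
  assumes g: "isometry r g" and h: "isometry r h"
    and hx: "\<forall>i<dimV r. mvec r h x i = y i" and gy: "\<forall>i<dimV r. mvec r g y i = z i"
  shows "\<forall>i<dimV r. mvec r (g * h) x i = z i"
proof (intro allI impI)
  fix i assume i: "i < dimV r"
  have c: "g \<in> carrier_mat (dimV r) (dimV r)" "h \<in> carrier_mat (dimV r) (dimV r)"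
    using g h by (auto simp: isometry_def)
  have "mvec r (g * h) x i = mvec r g (mvec r h x) i" by (rule mvec_mult[OF c i])
  also have "\<dots> = mvec r g y i" by (rule mvec_cong) (use hx in auto)
  finally show "mvec r (g * h) x i = z i" using gy i by simp
qed

lemma reflection_maps_vector:
  assumes e: "bform r a a = bform r b b" and v: "bform r (\<lambda>i. a i - b i) (\<lambda>i. a i - b i) \<noteq> 0"
    and ac: "bform r a c = 0" and bc: "bform r b c = 0"
  shows "\<forall>i<dimV r. mvec r (reflection r (\<lambda>i. a i - b i)) a i = b i"
    "\<forall>i<dimV r. mvec r (reflection r (\<lambda>i. a i - b i)) c i = c i"
proof -
  let ?v = "\<lambda>i. a i - b i"
  have vv: "bform r ?v ?v = 2 * (bform r a a - bform r a b)"
    using e bform_sym[of r b a] by (simp add: bform_diff_left bform_diff_right)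
  have "2 / bform r ?v ?v * bform r a ?v = 1"
    using v unfolding vv by (simp add: bform_diff_right field_simps)
  then show "\<forall>i<dimV r. mvec r (reflection r ?v) a i = b i" by (simp add: mvec_reflection)
  have "bform r c ?v = 0" using ac bc by (simp add: bform_diff_right bform_sym[of r c])
  then show "\<forall>i<dimV r. mvec r (reflection r ?v) c i = c i" by (simp add: mvec_reflection)
qed

text \<open>If the reflection in \<open>a - b\<close> is undefined, the one in \<open>a + b\<close> is defined and maps \<open>a\<close>
  to \<open>-b\<close>; the reflection in \<open>b\<close> then finishes.\<close>

lemma isometry_move_vector_fixing:
  assumes e: "bform r a a = bform r b b" and nz: "bform r a a \<noteq> 0" and ac: "bform r a c = 0" and bc: "bform r b c = 0"
  shows "\<exists>g. isometry r g \<and> (\<forall>i<dimV r. mvec r g a i = b i) \<and> (\<forall>i<dimV r. mvec r g c i = c i)"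
proof (cases "bform r (\<lambda>i. a i - b i) (\<lambda>i. a i - b i) = 0")
  case False
  then show ?thesis using isometry_reflection[OF False] reflection_maps_vector[OF e False ac bc] by blast
next
  case True
  let ?v = "\<lambda>i. a i - - b i"
  have ab: "bform r a b = bform r a a" using True e bform_sym[of r b a] by (simp add: bform_diff_left bform_diff_right)
  have "bform r ?v ?v = 4 * bform r a a" using e ab bform_sym[of r b a] by (simp add: bform_add_left bform_add_right)
  hence v: "bform r ?v ?v \<noteq> 0" using nz by simp
  have "bform r (\<lambda>i. - b i) (\<lambda>i. - b i) = - bform r b (\<lambda>i. - b i)" by (rule bform_uminus_left)
  also have "bform r b (\<lambda>i. - b i) = - bform r b b" by (subst bform_sym) (rule bform_uminus_left)
  finally have e': "bform r a a = bform r (\<lambda>i. - b i) (\<lambda>i. - b i)" using e by simp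
  have bc': "bform r (\<lambda>i. - b i) c = 0" using bc by (simp add: bform_uminus_left)
  note refl1 = reflection_maps_vector[OF e' v ac bc']
  have bnz: "bform r b b \<noteq> 0" using e nz by simp
  have "bform r (\<lambda>i. - b i) b = - bform r b b" by (rule bform_uminus_left)
  hence refl2: "\<forall>i<dimV r. mvec r (reflection r b) (\<lambda>i. - b i) i = b i"
    using bnz by (simp add: mvec_reflection field_simps)
  have fix2: "\<forall>i<dimV r. mvec r (reflection r b) c i = c i"
    using bc by (simp add: mvec_reflection bform_sym[of r c])
  have g: "isometry r (reflection r b)" "isometry r (reflection r ?v)"
    using isometry_reflection[OF bnz] isometry_reflection[OF v] .
  show ?thesis
    using isometry_mult[OF g] mvec_mult_chain[OF g refl1(1) refl2] mvec_mult_chain[OF g refl1(2) fix2] by blast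
qed

lemma bform_e0_e2r:
  assumes "r \<ge> 1"
  shows "bform r (unit_vec 0) (unit_vec 0) = 0"
    "bform r (unit_vec 0) (unit_vec (2*r)) = 1"
    "bform r (unit_vec (2*r)) (unit_vec 0) = 1"
    "bform r (unit_vec (2*r)) (unit_vec (2*r)) = 0"
  using assms by (simp_all add: bform_unit dimV_def)

lemma isometry_move_orthogonal_pair:
  assumes a1: "bform r a1 a1 = bform r b1 b1" "bform r a1 a1 \<noteq> 0"
    and a2: "bform r a2 a2 = bform r b2 b2" "bform r a2 a2 \<noteq> 0"
    and orth: "bform r a2 a1 = 0" "bform r b2 b1 = 0"
  shows "\<exists>g. isometry r g \<and> (\<forall>i<dimV r. mvec r g a1 i = b1 i) \<and> (\<forall>i<dimV r. mvec r g a2 i = b2 i)"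
proof -
  obtain g1 where g1: "isometry r g1" "\<forall>i<dimV r. mvec r g1 a1 i = b1 i"
    using isometry_move_vector_fixing[of r a1 b1 "\<lambda>_. 0"] a1 by (auto simp: bform_def)
  define a2' where "a2' = mvec r g1 a2"
  have "bform r a2' a2' = bform r b2 b2" unfolding a2'_def using isometry_bform[OF g1(1)] a2(1) by simp
  moreover have "bform r a2' b1 = 0"
  proof -
    have "bform r a2' b1 = bform r (mvec r g1 a2) (mvec r g1 a1)" unfolding a2'_def
      by (rule bform_cong) (use g1(2) in auto)
    thus ?thesis using isometry_bform[OF g1(1)] orth(1) by simp
  qed
  ultimately obtain g2 where g2: "isometry r g2" "\<forall>i<dimV r. mvec r g2 a2' i = b2 i" "\<forall>i<dimV r. mvec r g2 b1 i = b1 i"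
    using isometry_move_vector_fixing[of r a2' b2 b1] a2 orth(2) by auto
  have "\<forall>i<dimV r. mvec r g1 a2 i = a2' i" by (simp add: a2'_def)
  then show ?thesis
    using isometry_mult[OF g2(1) g1(1)] mvec_mult_chain[OF g2(1) g1] mvec_mult_chain[OF g2(1) g1(1) _ g2(2)] g2(3)
    by blast
qed

text \<open>The hyperbolic pair is reached by moving the orthogonal anisotropic vectors
  \<open>v\<^sub>1 \<plusminus> v\<^sub>-\<^sub>1\<close> to \<open>p \<plusminus> q\<close>.\<close>

lemma isometry_hyperbolic_pair:
  assumes r1: "r \<ge> 1" and pp: "bform r p p = 0" and qq: "bform r q q = 0" and pq: "bform r p q = 1"
  shows "\<exists>g. isometry r g \<and> (\<forall>i<dimV r. g $$ (i, 0) = p i) \<and> (\<forall>i<dimV r. g $$ (i, 2*r) = q i)"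
proof -
  define e0 :: "nat \<Rightarrow> complex" where "e0 = unit_vec 0"
  define e2 :: "nat \<Rightarrow> complex" where "e2 = unit_vec (2*r)"
  note E = bform_e0_e2r[OF r1, folded e0_def e2_def]
  have qp: "bform r q p = 1" using pq by (simp add: bform_sym)
  have "\<exists>g. isometry r g \<and> (\<forall>i<dimV r. mvec r g (\<lambda>k. e0 k + e2 k) i = p i + q i)
      \<and> (\<forall>i<dimV r. mvec r g (\<lambda>k. e0 k - e2 k) i = p i - q i)"
    by (rule isometry_move_orthogonal_pair)
      (simp_all add: bform_add_left bform_add_right bform_diff_left bform_diff_right E pp qq pq qp)
  then obtain g where g: "isometry r g" "\<forall>i<dimV r. mvec r g (\<lambda>k. e0 k + e2 k) i = p i + q i"
    "\<forall>i<dimV r. mvec r g (\<lambda>k. e0 k - e2 k) i = p i - q i"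
    by blast
  have half: "mvec r g (\<lambda>k. 1/2 * (e0 k + e2 k) + s/2 * (e0 k - e2 k)) i = 1/2 * (p i + q i) + s/2 * (p i - q i)"
    if "i < dimV r" for s i
    unfolding mvec_lin using g that by simp
  have "g $$ (i, 0) = p i" if i: "i < dimV r" for i
  proof -
    have "g $$ (i, 0) = mvec r g e0 i" unfolding e0_def by (rule mvec_unit[symmetric]) (simp add: dimV_def)
    also have "e0 = (\<lambda>k. 1/2 * (e0 k + e2 k) + 1/2 * (e0 k - e2 k))" by (simp add: field_simps)
    finally show ?thesis using half[OF i, of 1] by (simp add: field_simps)
  qed
  moreover have "g $$ (i, 2*r) = q i" if i: "i < dimV r" for i
  proof -
    have "g $$ (i, 2*r) = mvec r g e2 i" unfolding e2_def by (rule mvec_unit[symmetric]) (simp add: dimV_def)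
    also have "e2 = (\<lambda>k. 1/2 * (e0 k + e2 k) + (-1)/2 * (e0 k - e2 k))" by (simp add: field_simps)
    finally show ?thesis using half[OF i, of "-1"] by (simp add: field_simps)
  qed
  ultimately show ?thesis using g(1) by blast
qed

lemma transpose_Jform_index:
  assumes gc: "g \<in> carrier_mat (dimV r) (dimV r)" and i: "i < dimV r" and m: "m < dimV r"
  shows "(transpose_mat g * Jform r) $$ (i, m) = g $$ (2*r - m, i)"
proof -
  have "(transpose_mat g * Jform r) $$ (i, m) = (\<Sum>k<dimV r. g $$ (k,i) * (if k + m = 2*r then 1 else 0))"
    using gc i m by (subst index_mult_sum[of _ "dimV r" "dimV r" _ "dimV r"]) (auto simp: Jform_index)
  also have "\<dots> = g $$ (2*r - m, i)" by (rule sum_Jform_right[OF m])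
  finally show ?thesis .
qed

lemma isometry_Jform:
  assumes g: "isometry r g"
  shows "transpose_mat g * Jform r * g = Jform r"
proof -
  have gc: "g \<in> carrier_mat (dimV r) (dimV r)" using g by (simp add: isometry_def)
  have tc: "transpose_mat g * Jform r \<in> carrier_mat (dimV r) (dimV r)" using gc by simp
  show ?thesis
  proof (rule eq_matI)
    fix i j assume "i < dim_row (Jform r)" "j < dim_col (Jform r)"
    hence ij: "i < dimV r" "j < dimV r" by auto
    have "(transpose_mat g * Jform r * g) $$ (i,j) = (\<Sum>m<dimV r. g $$ (2*r - m, i) * g $$ (m, j))"
      by (subst index_mult_sum[OF tc gc ij]) (simp add: transpose_Jform_index[OF gc ij(1)])
    also have "\<dots> = (\<Sum>m<dimV r. g $$ (m, j) * g $$ (2*r - m, i))" by (simp add: mult.commute)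
    also have "\<dots> = bform r (\<lambda>k. g $$ (k,j)) (\<lambda>k. g $$ (k,i))" by (simp add: bform_def)
    also have "\<dots> = of_bool (j + i = 2*r)" using g ij by (simp add: isometry_def)
    also have "\<dots> = Jform r $$ (i,j)" using ij by (simp add: Jform_index)
    finally show "(transpose_mat g * Jform r * g) $$ (i,j) = Jform r $$ (i,j)" .
  qed (use gc in auto)
qed

lemma isometry_det_square: assumes g: "isometry r g" shows "det g * det g = 1"
proof -
  have gc: "g \<in> carrier_mat (dimV r) (dimV r)" using g by (simp add: isometry_def)
  have dJ: "det (Jform r) \<noteq> 0"
    using arg_cong[OF Jform_square[of r], of det] det_mult[OF Jform_carrier Jform_carrier] by auto
  have "det (transpose_mat g * Jform r * g) = det (Jform r)" using isometry_Jform[OF g] by simp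
  moreover have "det (transpose_mat g * Jform r * g) = det g * det (Jform r) * det g"
    using gc by (simp add: det_mult[of _ "dimV r"] det_transpose)
  ultimately have "(det g * det g - 1) * det (Jform r) = 0" by (simp add: algebra_simps)
  thus ?thesis using dJ by simp
qed

lemma isometry_uminus: assumes g: "isometry r g" shows "isometry r ((-1) \<cdot>\<^sub>m g)"
  unfolding isometry_def
proof (intro conjI allI impI)
  have gc: "g \<in> carrier_mat (dimV r) (dimV r)" using g by (simp add: isometry_def)
  thus "(-1) \<cdot>\<^sub>m g \<in> carrier_mat (dimV r) (dimV r)" by simp
  fix i j assume ij: "i < dimV r" "j < dimV r"
  have "bform r (\<lambda>k. ((-1) \<cdot>\<^sub>m g) $$ (k,i)) (\<lambda>k. ((-1) \<cdot>\<^sub>m g) $$ (k,j)) = bform r (\<lambda>k. g $$ (k,i)) (\<lambda>k. g $$ (k,j))"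
    unfolding bform_def using gc ij by (intro sum.cong refl) (auto simp: dimV_def)
  thus "bform r (\<lambda>k. ((-1) \<cdot>\<^sub>m g) $$ (k,i)) (\<lambda>k. ((-1) \<cdot>\<^sub>m g) $$ (k,j)) = of_bool (i + j = 2*r)"
    using g ij by (simp add: isometry_def)
qed

lemma transpose_Jform_mult_index:
  assumes gc: "g \<in> carrier_mat (dimV r) (dimV r)" and ij: "i < dimV r" "j < dimV r"
  shows "(transpose_mat g * Jform r * g) $$ (i,j) = bform r (\<lambda>k. g $$ (k,j)) (\<lambda>k. g $$ (k,i))"
proof -
  have tc: "transpose_mat g * Jform r \<in> carrier_mat (dimV r) (dimV r)" using gc by simp
  have "(transpose_mat g * Jform r * g) $$ (i,j) = (\<Sum>m<dimV r. g $$ (2*r - m, i) * g $$ (m, j))"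
    by (subst index_mult_sum[OF tc gc ij]) (simp add: transpose_Jform_index[OF gc ij(1)])
  also have "\<dots> = (\<Sum>m<dimV r. g $$ (m, j) * g $$ (2*r - m, i))" by (simp add: mult.commute)
  finally show ?thesis by (simp add: bform_def)
qed

lemma SOgrp_isometry:
  assumes g: "g \<in> SOgrp r"
  shows "isometry r g"
  unfolding isometry_def
proof (intro conjI allI impI)
  show gc: "g \<in> carrier_mat (dimV r) (dimV r)" using g by (simp add: SOgrp_def)
  fix i j assume ij: "i < dimV r" "j < dimV r"
  have e: "transpose_mat g * Jform r * g = Jform r" using g by (simp add: SOgrp_def)
  have "bform r (\<lambda>k. g $$ (k,i)) (\<lambda>k. g $$ (k,j)) = (transpose_mat g * Jform r * g) $$ (j,i)"
    using transpose_Jform_mult_index[OF gc ij(2) ij(1)] by simp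
  also have "\<dots> = of_bool (i + j = 2*r)" unfolding e using ij by (simp add: Jform_index add.commute)
  finally show "bform r (\<lambda>k. g $$ (k,i)) (\<lambda>k. g $$ (k,j)) = of_bool (i + j = 2*r)" .
qed

lemma wedge_conj:
  assumes g: "isometry r g"
  shows "wedge r (mvec r g u) (mvec r g w) * g = g * wedge r u w"
proof -
  have gc: "g \<in> carrier_mat (dimV r) (dimV r)" using g by (simp add: isometry_def)
  show ?thesis
  proof (rule eq_matI)
    fix i j assume "i < dim_row (g * wedge r u w)" "j < dim_col (g * wedge r u w)"
    hence ij: "i < dimV r" "j < dimV r" using gc by auto
    have cj: "\<And>x. bform r (\<lambda>k. g $$ (k, j)) (mvec r g x) = x (2*r - j)"
    proof -
      fix x
      have "bform r (\<lambda>k. g $$ (k, j)) (mvec r g x) = bform r (mvec r g (unit_vec j)) (mvec r g x)"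
        using ij by (intro bform_cong) (simp_all add: mvec_unit)
      also have "\<dots> = bform r (unit_vec j) x" by (rule isometry_bform[OF g])
      also have "\<dots> = x (2*r - j)" using ij by (simp add: bform_unit)
      finally show "bform r (\<lambda>k. g $$ (k, j)) (mvec r g x) = x (2*r - j)" .
    qed
    have "(wedge r (mvec r g u) (mvec r g w) * g) $$ (i,j)
        = (\<Sum>m<dimV r. (mvec r g u i * mvec r g w (2*r - m) - mvec r g w i * mvec r g u (2*r - m)) * g $$ (m,j))"
      using gc ij by (subst index_mult_sum[of _ "dimV r" "dimV r" _ "dimV r"]) auto
    also have "\<dots> = mvec r g u i * bform r (\<lambda>k. g $$ (k, j)) (mvec r g w) - mvec r g w i * bform r (\<lambda>k. g $$ (k, j)) (mvec r g u)"
      unfolding bform_def by (simp add: sum_distrib_left sum_subtractf[symmetric] algebra_simps)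
    also have "\<dots> = mvec r g u i * w (2*r - j) - mvec r g w i * u (2*r - j)" by (simp add: cj)
    also have "\<dots> = (\<Sum>k<dimV r. g $$ (i,k) * (u k * w (2*r - j) - w k * u (2*r - j)))"
    proof -
      have "(\<Sum>k<dimV r. g $$ (i,k) * (u k * w (2*r - j) - w k * u (2*r - j)))
          = (\<Sum>k<dimV r. (g $$ (i,k) * u k) * w (2*r - j) - (g $$ (i,k) * w k) * u (2*r - j))"
        by (intro sum.cong refl) (simp add: algebra_simps)
      also have "\<dots> = (\<Sum>k<dimV r. g $$ (i,k) * u k) * w (2*r - j) - (\<Sum>k<dimV r. g $$ (i,k) * w k) * u (2*r - j)"
        by (simp add: sum_subtractf sum_distrib_right)
      finally show ?thesis unfolding mvec_def by simp
    qed
    also have "\<dots> = (g * wedge r u w) $$ (i,j)"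
      using gc ij by (subst index_mult_sum[of _ "dimV r" "dimV r" _ "dimV r"]) auto
    finally show "(wedge r (mvec r g u) (mvec r g w) * g) $$ (i,j) = (g * wedge r u w) $$ (i,j)" .
  qed (use gc in auto)
qed

text \<open>Since \<open>dimV r\<close> is odd, one of \<open>g\<close> and \<open>-g\<close> has determinant \<open>1\<close>.\<close>

lemma isometry_SOgrp_up_to_sign:
  assumes g: "isometry r g"
  shows "g \<in> SOgrp r \<or> (-1) \<cdot>\<^sub>m g \<in> SOgrp r"
proof -
  have gc: "g \<in> carrier_mat (dimV r) (dimV r)" using g by (simp add: isometry_def)
  have "det g = 1 \<or> det g = -1"
    using isometry_det_square[OF g] square_eq_1_iff[of "det g"] by (simp add: power2_eq_square)
  moreover have "det ((-1) \<cdot>\<^sub>m g) = - det g" using gc by (simp add: dimV_def)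
  ultimately show ?thesis
    using gc isometry_Jform[OF g] isometry_Jform[OF isometry_uminus[OF g]] by (auto simp: SOgrp_def)
qed

lemma smult_wedge_hyperbolic_in_orbit:
  assumes r1: "r \<ge> 1" and pp: "bform r p p = 0" and qq: "bform r q q = 0" and pq: "bform r p q = 1"
  shows "k \<cdot>\<^sub>m wedge r p q \<in> orbit r (cline (hvec r (eps 1)))"
proof -
  obtain g where g: "isometry r g" "\<forall>i<dimV r. g $$ (i, 0) = p i" "\<forall>i<dimV r. g $$ (i, 2*r) = q i"
    using isometry_hyperbolic_pair[OF r1 pp qq pq] by blast
  have gc: "g \<in> carrier_mat (dimV r) (dimV r)" using g(1) by (simp add: isometry_def)
  have "wedge r (mvec r g (unit_vec 0)) (mvec r g (unit_vec (2*r))) = wedge r p q"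
    by (rule wedge_cong) (simp_all add: mvec_unit g(2,3) dimV_def)
  moreover have "hvec r (eps 1) = wedge r (unit_vec 0) (unit_vec (2*r))"
    using smult_hvec_eps1_wedge[OF r1, of 1] hvec_smult[of r 1 "eps 1"] by simp
  ultimately have W: "g * hvec r (eps 1) = wedge r p q * g"
    using wedge_conj[OF g(1), of "\<lambda>m. of_bool (m = 0)" "\<lambda>m. of_bool (m = 2*r)"] by simp
  have conj_g: "g * (k \<cdot>\<^sub>m hvec r (eps 1)) = (k \<cdot>\<^sub>m wedge r p q) * g"
    unfolding mult_smult_distrib[OF gc hvec_carrier] mult_smult_assoc_mat[OF wedge_carrier gc] W ..
  have "((-1) \<cdot>\<^sub>m g) * (k \<cdot>\<^sub>m hvec r (eps 1)) = (-1) \<cdot>\<^sub>m ((k \<cdot>\<^sub>m wedge r p q) * g)"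
    unfolding mult_smult_assoc_mat[OF gc smult_carrier_mat[OF hvec_carrier]] conj_g ..
  also have "\<dots> = (k \<cdot>\<^sub>m wedge r p q) * ((-1) \<cdot>\<^sub>m g)"
    by (rule mult_smult_distrib[OF smult_carrier_mat[OF wedge_carrier] gc, symmetric])
  finally have conj_neg_g: "((-1) \<cdot>\<^sub>m g) * (k \<cdot>\<^sub>m hvec r (eps 1)) = (k \<cdot>\<^sub>m wedge r p q) * ((-1) \<cdot>\<^sub>m g)" .
  have "k \<cdot>\<^sub>m hvec r (eps 1) \<in> cline (hvec r (eps 1))" unfolding cline_def by blast
  then show ?thesis
    using isometry_SOgrp_up_to_sign[OF g(1)] conj_g conj_neg_g unfolding orbit_def by auto
qed

lemma orbit_eps1_wedge:
  assumes r1: "r \<ge> 1" and mc: "mu \<in> carrier_mat (dimV r) (dimV r)" and g: "g \<in> SOgrp r"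
    and eq: "g * (k \<cdot>\<^sub>m hvec r (eps 1)) = mu * g"
  shows "mu = wedge r (mvec r g (\<lambda>m. k * of_bool (m = 0))) (mvec r g (unit_vec (2*r)))"
proof -
  have gi: "isometry r g" by (rule SOgrp_isometry[OF g])
  have gc: "g \<in> carrier_mat (dimV r) (dimV r)" using g by (simp add: SOgrp_def)
  let ?L = "wedge r (mvec r g (\<lambda>m. k * of_bool (m = 0))) (mvec r g (unit_vec (2*r)))"
  have c1: "?L * g = mu * g"
    using wedge_conj[OF gi, of "\<lambda>m. k * of_bool (m = 0)" "\<lambda>m. of_bool (m = 2*r)"] eq unfolding smult_hvec_eps1_wedge[OF r1, of k] by simp
  define H where "H = Jform r * transpose_mat g * Jform r"
  have hc: "H \<in> carrier_mat (dimV r) (dimV r)" unfolding H_def using gc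
    by (intro mult_carrier_mat[of _ _ "dimV r"] Jform_carrier) auto
  have "H * g = Jform r * (transpose_mat g * Jform r * g)"
    unfolding H_def using gc by (simp add: assoc_mult_mat[of _ "dimV r" "dimV r" _ "dimV r" _ "dimV r"])
  also have "\<dots> = 1\<^sub>m (dimV r)" using isometry_Jform[OF gi] Jform_square by simp
  finally have hg: "H * g = 1\<^sub>m (dimV r)" .
  have gh: "g * H = 1\<^sub>m (dimV r)" by (rule mat_mult_left_right_inverse[OF hc gc hg])
  have "mu = mu * (g * H)" using mc gh by simp
  also have "\<dots> = (mu * g) * H" using mc gc hc by (simp add: assoc_mult_mat[of _ "dimV r" "dimV r" _ "dimV r" _ "dimV r"])
  also have "\<dots> = (?L * g) * H" using c1 by simp
  also have "\<dots> = ?L * (g * H)" using gc hc by (simp add: assoc_mult_mat[of _ "dimV r" "dimV r" _ "dimV r" _ "dimV r"])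
  also have "\<dots> = ?L" using gh by simp
  finally show ?thesis .
qed

lemma bform_eps_units:
  assumes i: "i \<in> {1..r}"
  shows "bform r (unit_vec (i - 1)) (unit_vec (i - 1)) = 0"
    "bform r (unit_vec (2*r + 1 - i)) (unit_vec (2*r + 1 - i)) = 0"
    "bform r (unit_vec (i - 1)) (unit_vec (2*r + 1 - i)) = 1"
proof -
  have lt: "i - 1 < dimV r" "2*r + 1 - i < dimV r" using i by (auto simp: dimV_def)
  show "bform r (unit_vec (i - 1)) (unit_vec (i - 1)) = 0"
    unfolding bform_unit[OF lt(1)] using i by simp arith
  show "bform r (unit_vec (2*r + 1 - i)) (unit_vec (2*r + 1 - i)) = 0"
    unfolding bform_unit[OF lt(2)] using i by simp arith
  show "bform r (unit_vec (i - 1)) (unit_vec (2*r + 1 - i)) = 1"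
    unfolding bform_unit[OF lt(1)] using i by simp
qed

lemma eps_lines_eq_orbit_inter_cartan:
  assumes r1: "r \<ge> 1"
  shows "(\<Union>i \<in> {1..r}. cline (hvec r (eps i))) = orbit r (cline (hvec r (eps 1))) \<inter> hcart r"
proof (intro equalityI subsetI)
  fix x assume "x \<in> (\<Union>i \<in> {1..r}. cline (hvec r (eps i)))"
  then obtain i k where i: "i \<in> {1..r}" and x: "x = k \<cdot>\<^sub>m hvec r (eps i)"
    unfolding cline_def by blast
  have "x \<in> orbit r (cline (hvec r (eps 1)))"
    unfolding x smult_hvec_eps_wedge_unit[OF i]
    by (rule smult_wedge_hyperbolic_in_orbit[OF r1 bform_eps_units[OF i]])
  moreover have "x \<in> hcart r" unfolding x hcart_def hvec_smult[symmetric] by (rule rangeI)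
  ultimately show "x \<in> orbit r (cline (hvec r (eps 1))) \<inter> hcart r" by blast
next
  fix x assume x: "x \<in> orbit r (cline (hvec r (eps 1))) \<inter> hcart r"
  then obtain d where d: "x = hvec r d" unfolding hcart_def by blast
  from x obtain g k where g: "g \<in> SOgrp r" "g * (k \<cdot>\<^sub>m hvec r (eps 1)) = x * g"
    and xc: "x \<in> carrier_mat (dimV r) (dimV r)" unfolding orbit_def cline_def by blast
  have x_wedge: "x = wedge r (mvec r g (\<lambda>m. k * of_bool (m = 0))) (mvec r g (unit_vec (2*r)))"
    by (rule orbit_eps1_wedge[OF r1 xc g])
  have "hvec r d \<in> (\<Union>i \<in> {1..r}. cline (hvec r (eps i)))"
    by (rule hvec_pfaff4_zero_imp_eps_line[OF _ r1]) (simp add: d[symmetric] x_wedge pfaff4_wedge)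
  then show "x \<in> (\<Union>i \<in> {1..r}. cline (hvec r (eps i)))" using d by simp
qed

section \<open>Semisimple decomposable elements\<close>

lemma diagonal_mat_mult_index:
  assumes D: "diagonal_mat D" "D \<in> carrier_mat n n" and B: "B \<in> carrier_mat n m" and ij: "i < n" "j < m"
  shows "(D * B) $$ (i,j) = D $$ (i,i) * B $$ (i,j)"
proof -
  have "(D * B) $$ (i,j) = (\<Sum>k<n. D $$ (i,k) * B $$ (k,j))" by (rule index_mult_sum[OF D(2) B ij])
  also have "\<dots> = (\<Sum>k<n. if k = i then D $$ (i,k) * B $$ (k,j) else 0)"
    using D ij by (intro sum.cong refl) (auto simp: diagonal_mat_def)
  also have "\<dots> = D $$ (i,i) * B $$ (i,j)" using ij by simp
  finally show ?thesis .
qed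

lemma diagonal_mat_cube_zero:
  fixes D :: "'a :: idom mat"
  assumes D: "diagonal_mat D" "D \<in> carrier_mat n n" and z: "D * (D * D) = 0\<^sub>m n n"
  shows "D = 0\<^sub>m n n"
proof (rule eq_matI)
  fix i j assume "i < dim_row (0\<^sub>m n n)" "j < dim_col (0\<^sub>m n n)"
  hence ij: "i < n" "j < n" by auto
  have "(D * (D * D)) $$ (i,i) = D $$ (i,i) * (D * D) $$ (i,i)"
    by (rule diagonal_mat_mult_index[OF D _ ij(1) ij(1)]) (use D in simp)
  also have "(D * D) $$ (i,i) = D $$ (i,i) * D $$ (i,i)"
    by (rule diagonal_mat_mult_index[OF D D(2) ij(1) ij(1)])
  finally have "D $$ (i,i) * (D $$ (i,i) * D $$ (i,i)) = (D * (D * D)) $$ (i,i)" ..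
  hence "D $$ (i,i) = 0" using z ij by simp
  thus "D $$ (i,j) = 0\<^sub>m n n $$ (i,j)" using D ij by (cases "i = j") (auto simp: diagonal_mat_def)
qed (use D in auto)

lemma semisimple_cube_zero:
  assumes ss: "semisimple l" and lc: "l \<in> carrier_mat n n" and z: "l * l * l = 0\<^sub>m n n"
  shows "l = 0\<^sub>m n n"
proof -
  obtain D P Q where D: "diagonal_mat D" and wit: "similar_mat_wit l D P Q"
    using ss by (auto simp: semisimple_def similar_mat_def)
  note c = similar_mat_witD2[OF lc wit]
  have "D ^\<^sub>m 3 = Q * l ^\<^sub>m 3 * P" by (rule similar_mat_wit_pow_id[OF similar_mat_wit_sym[OF wit]])
  also have "l ^\<^sub>m 3 = 0\<^sub>m n n" using lc z by (simp add: numeral_3_eq_3)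
  finally have "D * (D * D) = 0\<^sub>m n n"
    using c by (simp add: numeral_3_eq_3 assoc_mult_mat[of _ n n _ n _ n])
  hence "D = 0\<^sub>m n n" by (rule diagonal_mat_cube_zero[OF D c(5)])
  thus ?thesis using c by simp
qed

text \<open>With \<open>a = B(u,u)\<close>, \<open>b = B(u,w)\<close>, \<open>c = B(w,w)\<close> and \<open>\<kappa>\<^sup>2 = b\<^sup>2 - ac\<close>, the vectors
  \<open>(b \<plusminus> \<kappa>) u - a w\<close> span the two isotropic lines of the plane; the second is rescaled so that
  the pair is hyperbolic.\<close>

lemma hyperbolic_pair_identities:
  fixes a b c ka :: complex
  assumes h: "ka * ka = b * b - a * c" and k0: "ka \<noteq> 0" and a0: "a \<noteq> 0"
  defines "D \<equiv> -2 * a * (ka * ka)"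
  shows "(b+ka) * (b+ka) * a + ((b+ka) * (-a) + (-a) * (b+ka)) * b + (-a) * (-a) * c = 0"
    "((b-ka)/D) * ((b-ka)/D) * a + (((b-ka)/D) * (-a/D) + (-a/D) * ((b-ka)/D)) * b + (-a/D) * (-a/D) * c = 0"
    "(b+ka) * ((b-ka)/D) * a + ((b+ka) * (-a/D) + (-a) * ((b-ka)/D)) * b + (-a) * (-a/D) * c = 1"
    "ka * ((b+ka) * (-a/D) - (-a) * ((b-ka)/D)) = 1"
proof -
  have D0: "D \<noteq> 0" unfolding D_def using k0 a0 by simp
  have "(b+ka) * (b+ka) * a + ((b+ka) * (-a) + (-a) * (b+ka)) * b + (-a) * (-a) * c = a * (ka * ka - (b * b - a * c))"
    by (simp add: algebra_simps)
  thus "(b+ka) * (b+ka) * a + ((b+ka) * (-a) + (-a) * (b+ka)) * b + (-a) * (-a) * c = 0"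
    using h by simp
  have "((b-ka)/D) * ((b-ka)/D) * a + (((b-ka)/D) * (-a/D) + (-a/D) * ((b-ka)/D)) * b + (-a/D) * (-a/D) * c
     = a * ((b-ka) * (b-ka) - 2 * (b-ka) * b + a * c) / (D * D)"
    using D0 by (simp add: field_simps)
  also have "(b-ka) * (b-ka) - 2 * (b-ka) * b + a * c = ka * ka - (b * b - a * c)" by (simp add: algebra_simps)
  also have "\<dots> = 0" using h by simp
  finally show "((b-ka)/D) * ((b-ka)/D) * a + (((b-ka)/D) * (-a/D) + (-a/D) * ((b-ka)/D)) * b + (-a/D) * (-a/D) * c = 0"
    by simp
  have "(b+ka) * ((b-ka)/D) * a + ((b+ka) * (-a/D) + (-a) * ((b-ka)/D)) * b + (-a) * (-a/D) * c
     = a * ((b+ka) * (b-ka) - (b+ka) * b - (b-ka) * b + a * c) / D"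
    using D0 by (simp add: field_simps)
  also have "a * ((b+ka) * (b-ka) - (b+ka) * b - (b-ka) * b + a * c) = D + a * (ka * ka - (b * b - a * c))"
    unfolding D_def by (simp add: algebra_simps)
  also have "\<dots> = D" using h by simp
  finally show "(b+ka) * ((b-ka)/D) * a + ((b+ka) * (-a/D) + (-a) * ((b-ka)/D)) * b + (-a) * (-a/D) * c = 1"
    using D0 by simp
  have "ka * ((b+ka) * (-a/D) - (-a) * ((b-ka)/D)) = (-2 * a * (ka * ka)) / D"
    using D0 by (simp add: field_simps)
  thus "ka * ((b+ka) * (-a/D) - (-a) * ((b-ka)/D)) = 1" using D0 unfolding D_def by simp
qed

lemma wedge_hyperbolic_normal_form_anisotropic:
  assumes K: "bform r u w * bform r u w - bform r u u * bform r w w \<noteq> 0" and a0: "bform r u u \<noteq> 0"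
  shows "\<exists>p q k. bform r p p = 0 \<and> bform r q q = 0 \<and> bform r p q = 1 \<and> wedge r u w = k \<cdot>\<^sub>m wedge r p q"
proof -
  let ?a = "bform r u u" and ?b = "bform r u w" and ?c = "bform r w w"
  define ka where "ka = csqrt (?b * ?b - ?a * ?c)"
  have h: "ka * ka = ?b * ?b - ?a * ?c" unfolding ka_def using power2_csqrt[of "?b * ?b - ?a * ?c"]
    by (simp add: power2_eq_square)
  have k0: "ka \<noteq> 0" using h K by auto
  define D where "D = -2 * ?a * (ka * ka)"
  note A = hyperbolic_pair_identities[OF h k0 a0, folded D_def]
  let ?p = "\<lambda>i. (?b + ka) * u i + (- ?a) * w i"
  let ?q = "\<lambda>i. ((?b - ka) / D) * u i + (- ?a / D) * w i"
  have "bform r ?p ?p = 0" unfolding bform_lin_both using A(1) by simp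
  moreover have "bform r ?q ?q = 0" unfolding bform_lin_both using A(2) by simp
  moreover have "bform r ?p ?q = 1" unfolding bform_lin_both using A(3) by simp
  moreover have "wedge r u w = ka \<cdot>\<^sub>m wedge r ?p ?q" by (rule wedge_reparam) (use A(4) in simp)
  ultimately show ?thesis by blast
qed

lemma wedge_hyperbolic_normal_form:
  assumes K: "bform r u w * bform r u w - bform r u u * bform r w w \<noteq> 0"
  shows "\<exists>p q k. bform r p p = 0 \<and> bform r q q = 0 \<and> bform r p q = 1 \<and> wedge r u w = k \<cdot>\<^sub>m wedge r p q"
proof (cases "bform r u u \<noteq> 0")
  case True thus ?thesis using wedge_hyperbolic_normal_form_anisotropic[OF K] by blast
next
  case False
  hence a0: "bform r u u = 0" by simp
  show ?thesis
  proof (cases "bform r w w \<noteq> 0")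
    case True
    have K': "bform r w u * bform r w u - bform r w w * bform r u u \<noteq> 0" using K by (simp add: bform_sym[of r w u] mult.commute)
    obtain p q k where pq: "bform r p p = 0" "bform r q q = 0" "bform r p q = 1" "wedge r w u = k \<cdot>\<^sub>m wedge r p q"
      using wedge_hyperbolic_normal_form_anisotropic[OF K' True] by blast
    have "wedge r u w = (-k) \<cdot>\<^sub>m wedge r p q"
      unfolding wedge_swap[of r u w] pq(4) by (rule eq_matI) auto
    thus ?thesis using pq by blast
  next
    case False
    hence c0: "bform r w w = 0" by simp
    have b0: "bform r u w \<noteq> 0" using K a0 c0 by simp
    let ?q = "\<lambda>i. 0 * u i + (1 / bform r u w) * w i"
    let ?p = "\<lambda>i. 1 * u i + 0 * w i"
    have "bform r ?p ?p = 0" unfolding bform_lin_both using a0 c0 by simp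
    moreover have "bform r ?q ?q = 0" unfolding bform_lin_both using a0 c0 by simp
    moreover have "bform r ?p ?q = 1" unfolding bform_lin_both using a0 c0 b0 by simp
    moreover have "wedge r u w = bform r u w \<cdot>\<^sub>m wedge r ?p ?q" by (rule wedge_reparam) (use b0 in simp)
    ultimately show ?thesis by blast
  qed
qed

lemma VW2_semisimple_in_orbit_varpi1:
  assumes r3: "r \<ge> 3" and l: "l \<in> VW2 r" and ss: "semisimple l" and nz: "l \<noteq> 0\<^sub>m (dimV r) (dimV r)"
  shows "l \<in> orbit r (cline (hvec r (fw r 1)))"
proof -
  have ls: "l \<in> so r" using l by (simp add: VW2_def)
  obtain u w where lu: "l = wedge r u w" using pfaff4_zero_imp_wedge[OF ls VW2_pfaff4_zero[OF r3 l]] by blast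
  have gram: "bform r u w * bform r u w - bform r u u * bform r w w \<noteq> 0"
  proof
    assume "bform r u w * bform r u w - bform r u u * bform r w w = 0"
    hence "l * l * l = 0\<^sub>m (dimV r) (dimV r)" unfolding lu wedge_cube by (simp add: smult_zero_wedge)
    thus False using semisimple_cube_zero[OF ss] ls nz by simp
  qed
  obtain p q k where pq: "bform r p p = 0" "bform r q q = 0" "bform r p q = 1" "wedge r u w = k \<cdot>\<^sub>m wedge r p q"
    using wedge_hyperbolic_normal_form[OF gram] by blast
  have "l \<in> orbit r (cline (hvec r (eps 1)))" unfolding lu pq(4)
    by (rule smult_wedge_hyperbolic_in_orbit[OF _ pq(1-3)]) (use r3 in simp)
  thus ?thesis using hvec_fw1_eq_eps1[OF r3] by simp
qed

theorem lemma7p5: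
  fixes r :: nat
  assumes "r \<ge> 3"
  shows "(\<forall>l \<in> VW2 r. semisimple l \<and> l \<noteq> 0\<^sub>m (dimV r) (dimV r) \<longrightarrow>
            l \<in> orbit r (cline (hvec r (fw r 1)))
          \<or> (\<exists>i \<in> {2..r-1}. l \<in> orbit r (cline (hvec r (\<lambda>j. - fw r (i - 1) j + fw r i j))))
          \<or> l \<in> orbit r (cline (hvec r (\<lambda>j. - fw r (r - 1) j + 2 * fw r r j))))
       \<and> (\<forall>c. hvec r c \<in> VW2 r \<longleftrightarrow> hvec r c \<in> (\<Union>i \<in> {1..r}. cline (hvec r (eps i))))
       \<and> (\<Union>i \<in> {1..r}. cline (hvec r (eps i))) = orbit r (cline (hvec r (eps 1))) \<inter> hcart r"
proof -
  have "r \<ge> 1" using assms by simp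
  then show ?thesis
    using VW2_semisimple_in_orbit_varpi1[OF assms] hvec_VW2_iff[OF assms]
      eps_lines_eq_orbit_inter_cartan
    by blast
qed

end
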